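(* Let $p$ be a prime and $\Gamma$ a profinite group acting trivially on $\mathbb{F}_p$. If every open subgroup of $\Gamma$ admits the cup product exact sequence property, then every closed subgroup of $\Gamma$ admits the cup product exact sequence property.
   Context: All cohomology is continuous with coefficients in the trivial module $\mathbb{F}_p$. A profinite group $H$ admits the cup product exact sequence property if for every $\chi\in H^1(H,\mathbb{F}_p)=\operatorname{Hom}(H,\mathbb{F}_p)$ the sequence $H^1(\ker\chi,\mathbb{F}_p)\xrightarrow{\operatorname{Cor}}H^1(H,\mathbb{F}_p)\xrightarrow{\chi\cup}H^2(H,\mathbb{F}_p)\xrightarrow{\operatorname{Res}}H^2(\ker\chi,\mathbb{F}_p)$ is exact at $H^1(H,\mathbb{F}_p)$ and at $H^2(H,\mathbb{F}_p)$. *)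

theory Defs
  imports "HOL-Analysis.Analysis" "HOL-Algebra.Coset" "Berlekamp_Zassenhaus.Finite_Field"
begin

text \<open>Coefficients: the prime field F_p is the type 'p mod_ring with 'p of class prime_card
  (i.e. CARD('p) = p is prime); it carries the discrete topology.\<close>

definition topological_group :: "('a,'b) monoid_scheme \<Rightarrow> 'a topology \<Rightarrow> bool" where
  "topological_group G T \<longleftrightarrow> group G \<and> topspace T = carrier G \<and>
     continuous_map (prod_topology T T) T (\<lambda>(x,y). x \<otimes>\<^bsub>G\<^esub> y) \<and>
     continuous_map T T (\<lambda>x. inv\<^bsub>G\<^esub> x)"

definition totally_disconnected_space :: "'a topology \<Rightarrow> bool" where
  "totally_disconnected_space T \<longleftrightarrow> (\<forall>S. connectedin T S \<longrightarrow> (\<exists>x. S \<subseteq> {x}))"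

definition profinite_group :: "('a,'b) monoid_scheme \<Rightarrow> 'a topology \<Rightarrow> bool" where
  "profinite_group G T \<longleftrightarrow> topological_group G T \<and> compact_space T \<and> Hausdorff_space T \<and>
     totally_disconnected_space T"

abbreviation subgrp :: "('a,'b) monoid_scheme \<Rightarrow> 'a set \<Rightarrow> ('a,'b) monoid_scheme" where
  "subgrp G H \<equiv> G\<lparr>carrier := H\<rparr>"

definition cochain1 :: "('a,'b) monoid_scheme \<Rightarrow> 'a topology \<Rightarrow> ('a \<Rightarrow> 'p::prime_card mod_ring) \<Rightarrow> bool" where
  "cochain1 G T f \<longleftrightarrow> continuous_map T (discrete_topology UNIV) f"

definition cochain2 :: "('a,'b) monoid_scheme \<Rightarrow> 'a topology \<Rightarrow> ('a \<times> 'a \<Rightarrow> 'p::prime_card mod_ring) \<Rightarrow> bool" where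
  "cochain2 G T f \<longleftrightarrow> continuous_map (prod_topology T T) (discrete_topology UNIV) f"

text \<open>H^1(G,F_p) = Hom_cont(G,F_p) (trivial action; 1-coboundaries vanish).\<close>
definition H1 :: "('a,'b) monoid_scheme \<Rightarrow> 'a topology \<Rightarrow> ('a \<Rightarrow> 'p::prime_card mod_ring) set" where
  "H1 G T = {f. cochain1 G T f \<and>
      (\<forall>x\<in>carrier G. \<forall>y\<in>carrier G. f (x \<otimes>\<^bsub>G\<^esub> y) = f x + f y)}"

definition Z2 :: "('a,'b) monoid_scheme \<Rightarrow> 'a topology \<Rightarrow> ('a \<times> 'a \<Rightarrow> 'p::prime_card mod_ring) set" where
  "Z2 G T = {f. cochain2 G T f \<and>
      (\<forall>g\<in>carrier G. \<forall>h\<in>carrier G. \<forall>k\<in>carrier G.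
         f (h, k) - f (g \<otimes>\<^bsub>G\<^esub> h, k) + f (g, h \<otimes>\<^bsub>G\<^esub> k) - f (g, h) = 0)}"

definition B2 :: "('a,'b) monoid_scheme \<Rightarrow> 'a topology \<Rightarrow> ('a \<times> 'a \<Rightarrow> 'p::prime_card mod_ring) set" where
  "B2 G T = {f. \<exists>\<phi>. cochain1 G T \<phi> \<and>
      (\<forall>g\<in>carrier G. \<forall>h\<in>carrier G. f (g, h) = \<phi> h - \<phi> (g \<otimes>\<^bsub>G\<^esub> h) + \<phi> g)}"

text \<open>H^2(G,F_p) = Z2/B2: two cocycles represent the same class iff their difference lies in B2.
  A class is zero iff a representative lies in B2.\<close>
definition cohomologous2 :: "('a,'b) monoid_scheme \<Rightarrow> 'a topology \<Rightarrow>
    ('a \<times> 'a \<Rightarrow> 'p::prime_card mod_ring) \<Rightarrow> ('a \<times> 'a \<Rightarrow> 'p mod_ring) \<Rightarrow> bool" where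
  "cohomologous2 G T f f' \<longleftrightarrow> (\<lambda>x. f x - f' x) \<in> B2 G T"

definition cup11 :: "('a \<Rightarrow> 'p::prime_card mod_ring) \<Rightarrow> ('a \<Rightarrow> 'p mod_ring) \<Rightarrow> ('a \<times> 'a \<Rightarrow> 'p mod_ring)" where
  "cup11 \<kappa> \<psi> = (\<lambda>(g, h). \<kappa> g * \<psi> h)"

definition kerF :: "('a,'b) monoid_scheme \<Rightarrow> ('a \<Rightarrow> 'p::prime_card mod_ring) \<Rightarrow> 'a set" where
  "kerF G \<kappa> = {g \<in> carrier G. \<kappa> g = 0}"

text \<open>Corestriction H^1(N) \<rightarrow> H^1(G) for a subgroup N of finite index: composition with the
  transfer, computed with a (chosen) right transversal R of N in G.\<close>
definition right_transversal :: "('a,'b) monoid_scheme \<Rightarrow> 'a set \<Rightarrow> 'a set" where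
  "right_transversal G N = (SOME R. R \<subseteq> carrier G \<and>
      (\<forall>x\<in>carrier G. \<exists>!r. r \<in> R \<and> x \<in> N #>\<^bsub>G\<^esub> r))"

definition coset_rep :: "('a,'b) monoid_scheme \<Rightarrow> 'a set \<Rightarrow> 'a \<Rightarrow> 'a" where
  "coset_rep G N x = (THE r. r \<in> right_transversal G N \<and> x \<in> N #>\<^bsub>G\<^esub> r)"

definition cor1 :: "('a,'b) monoid_scheme \<Rightarrow> 'a set \<Rightarrow> ('a \<Rightarrow> 'p::prime_card mod_ring) \<Rightarrow> ('a \<Rightarrow> 'p mod_ring)" where
  "cor1 G N \<phi> = (\<lambda>g. \<Sum>r\<in>right_transversal G N.
      \<phi> (r \<otimes>\<^bsub>G\<^esub> g \<otimes>\<^bsub>G\<^esub> inv\<^bsub>G\<^esub> (coset_rep G N (r \<otimes>\<^bsub>G\<^esub> g))))"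

text \<open>The cup product exact sequence property for (G,T) with coefficients F_p = 'p mod_ring:
  for every \<kappa> \<in> H^1(G), the sequence
  H^1(ker \<kappa>) --Cor--> H^1(G) --\<kappa>\<union>--> H^2(G) --Res--> H^2(ker \<kappa>)
  is exact at H^1(G) and at H^2(G).\<close>
definition cup_exact :: "('a,'b) monoid_scheme \<Rightarrow> 'a topology \<Rightarrow> 'p::prime_card itself \<Rightarrow> bool" where
  "cup_exact G T (_ :: 'p itself) \<longleftrightarrow>
    (\<forall>\<kappa> \<in> (H1 G T :: ('a \<Rightarrow> 'p mod_ring) set).
      let N = kerF G \<kappa>; GN = subgrp G N; TN = subtopology T N in
      \<comment> \<open>exactness at H^1(G): im Cor \<subseteq> ker (\<kappa>\<union>) and ker (\<kappa>\<union>) \<subseteq> im Cor\<close>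
      (\<forall>\<phi> \<in> H1 GN TN. cup11 \<kappa> (cor1 G N \<phi>) \<in> B2 G T) \<and>
      (\<forall>\<psi> \<in> H1 G T. cup11 \<kappa> \<psi> \<in> B2 G T \<longrightarrow>
          (\<exists>\<phi> \<in> H1 GN TN. \<forall>g\<in>carrier G. \<psi> g = cor1 G N \<phi> g)) \<and>
      \<comment> \<open>exactness at H^2(G): im (\<kappa>\<union>) \<subseteq> ker Res and ker Res \<subseteq> im (\<kappa>\<union>)\<close>
      (\<forall>\<psi> \<in> H1 G T. cup11 \<kappa> \<psi> \<in> B2 GN TN) \<and>
      (\<forall>f \<in> Z2 G T. f \<in> B2 GN TN \<longrightarrow>
          (\<exists>\<psi> \<in> H1 G T. cohomologous2 G T f (cup11 \<kappa> \<psi>))))"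

end

theory Submission
  imports Defs "HOL-Algebra.Zassenhaus"
begin

definition hom_on :: "('a,'b) monoid_scheme \<Rightarrow> 'a set \<Rightarrow> ('a \<Rightarrow> 'c::ab_group_add) \<Rightarrow> bool" where
  "hom_on G S f \<longleftrightarrow> (\<forall>x\<in>S. \<forall>y\<in>S. f (x \<otimes>\<^bsub>G\<^esub> y) = f x + f y)"

definition ker_on :: "'a set \<Rightarrow> ('a \<Rightarrow> 'c::zero) \<Rightarrow> 'a set" where
  "ker_on S f = {x \<in> S. f x = 0}"

lemma hom_onD: "hom_on G S f \<Longrightarrow> x \<in> S \<Longrightarrow> y \<in> S \<Longrightarrow> f (x \<otimes>\<^bsub>G\<^esub> y) = f x + f y"
  unfolding hom_on_def by blast

lemma hom_on_subset: "hom_on G S f \<Longrightarrow> A \<subseteq> S \<Longrightarrow> hom_on G A f"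
  unfolding hom_on_def by blast

lemma hom_on_update [simp]: "hom_on (G\<lparr>carrier := S\<rparr>) A f = hom_on G A f"
  unfolding hom_on_def by simp

lemma ker_on_subset: "ker_on S f \<subseteq> S"
  unfolding ker_on_def by blast

context group
begin

lemma subgroup_nat_pow_closed: "subgroup S G \<Longrightarrow> x \<in> S \<Longrightarrow> x [^] (n::nat) \<in> S"
  using subgroup_int_pow_closed[of S x "int n"] by (simp add: int_pow_int)

lemma hom_on_one:
  assumes "subgroup S G" "hom_on G S f"
  shows "f \<one> = 0"
proof -
  have "f (\<one> \<otimes> \<one>) = f \<one> + f \<one>"
    using assms by (intro hom_onD) (auto intro: subgroup.one_closed)
  then show ?thesis by simp
qed

lemma hom_on_inv:
  assumes S: "subgroup S G" and f: "hom_on G S f" and x: "x \<in> S"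
  shows "f (inv x) = - f x"
proof -
  have "f (x \<otimes> inv x) = f x + f (inv x)"
    using f x subgroup.m_inv_closed[OF S x] by (rule hom_onD)
  then have "f x + f (inv x) = 0"
    using hom_on_one[OF S f] subgroup.mem_carrier[OF S x] by simp
  then show ?thesis by (simp add: eq_neg_iff_add_eq_0 add.commute)
qed

lemma hom_on_nat_pow:
  fixes f :: "'a \<Rightarrow> 'c::ring_1"
  assumes S: "subgroup S G" and f: "hom_on G S f" and x: "x \<in> S"
  shows "f (x [^] n) = of_nat n * f x"
proof (induction n)
  case 0
  show ?case using hom_on_one[OF S f] by simp
next
  case (Suc n)
  have "f (x [^] n \<otimes> x) = f (x [^] n) + f x"
    using f subgroup_nat_pow_closed[OF S x] x by (rule hom_onD)
  then show ?case using Suc by (simp add: distrib_right)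
qed

lemma hom_on_mult_inv:
  assumes S: "subgroup S G" and f: "hom_on G S f" and abc: "a \<in> S" "b \<in> S" "c \<in> S"
  shows "f (a \<otimes> b \<otimes> inv c) = f a + f b - f c"
  using hom_onD[OF f subgroup.m_closed[OF S abc(1,2)] subgroup.m_inv_closed[OF S abc(3)]]
    hom_onD[OF f abc(1,2)] hom_on_inv[OF S f abc(3)] by simp

lemma subgroup_ker_on:
  assumes S: "subgroup S G" and f: "hom_on G S f"
  shows "subgroup (ker_on S f) G"
proof (rule subgroupI)
  show "ker_on S f \<subseteq> carrier G"
    using ker_on_subset subgroup.subset[OF S] by (rule order_trans)
  show "ker_on S f \<noteq> {}"
    using hom_on_one[OF S f] subgroup.one_closed[OF S] unfolding ker_on_def by blast
  fix a b assume "a \<in> ker_on S f" "b \<in> ker_on S f"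
  then have "a \<in> S" "f a = 0" "b \<in> S" "f b = 0"
    unfolding ker_on_def by auto
  then show "inv a \<in> ker_on S f" "a \<otimes> b \<in> ker_on S f"
    using hom_on_inv[OF S f] hom_onD[OF f] subgroup.m_inv_closed[OF S] subgroup.m_closed[OF S]
    unfolding ker_on_def by simp_all
qed

lemma ker_on_r_coset_iff:
  assumes S: "subgroup S G" and f: "hom_on G S f" and r: "r \<in> S"
  shows "x \<in> ker_on S f #> r \<longleftrightarrow> x \<in> S \<and> f x = f r"
proof
  assume "x \<in> ker_on S f #> r"
  then obtain n where "n \<in> S" "f n = 0" "x = n \<otimes> r"
    unfolding r_coset_def ker_on_def by auto
  then show "x \<in> S \<and> f x = f r"
    using hom_onD[OF f _ r] subgroup.m_closed[OF S _ r] by simp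
next
  assume "x \<in> S \<and> f x = f r"
  then have x: "x \<in> S" "f x = f r" by auto
  have n: "x \<otimes> inv r \<in> ker_on S f"
    using hom_onD[OF f x(1) subgroup.m_inv_closed[OF S r]] hom_on_inv[OF S f r] x(2)
      subgroup.m_closed[OF S x(1) subgroup.m_inv_closed[OF S r]]
    unfolding ker_on_def by simp
  have "x \<otimes> inv r \<otimes> r \<in> ker_on S f #> r"
    unfolding r_coset_def using n by (rule UN_I) simp
  moreover have "x \<otimes> inv r \<otimes> r = x"
    using subgroup.mem_carrier[OF S x(1)] subgroup.mem_carrier[OF S r] by (simp add: m_assoc)
  ultimately show "x \<in> ker_on S f #> r" by simp
qed


lemma right_transversal_spec:
  assumes N: "subgroup N G"
  shows "right_transversal G N \<subseteq> carrier G \<and>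
    (\<forall>x\<in>carrier G. \<exists>!r. r \<in> right_transversal G N \<and> x \<in> N #> r)"
proof -
  define pick where "pick C = (SOME r. r \<in> C)" for C :: "'a set"
  define R where "R = pick ` (rcosets N)"
  have pick_in: "pick (N #> a) \<in> N #> a" if "a \<in> carrier G" for a
    unfolding pick_def using rcos_self[OF that N] by (rule someI)
  have pick_coset: "N #> pick (N #> a) = N #> a" if "a \<in> carrier G" for a
    using repr_independence[OF pick_in[OF that] that N] by (rule sym)
  have pick_carrier: "pick (N #> a) \<in> carrier G" if "a \<in> carrier G" for a
    using r_coset_subset_G[OF subgroup.subset[OF N] that] pick_in[OF that] ..
  have R_elem: "\<exists>a\<in>carrier G. r = pick (N #> a)" if "r \<in> R" for r
    using that unfolding R_def RCOSETS_def by auto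
  have "R \<subseteq> carrier G"
  proof
    fix r assume "r \<in> R"
    then obtain a where "a \<in> carrier G" "r = pick (N #> a)" using R_elem by blast
    then show "r \<in> carrier G" using pick_carrier by simp
  qed
  moreover have "\<exists>!r. r \<in> R \<and> x \<in> N #> r" if x: "x \<in> carrier G" for x
  proof (rule ex1I)
    have "N #> x \<in> rcosets N"
      unfolding RCOSETS_def using x by blast
    then have "pick (N #> x) \<in> R"
      unfolding R_def by (rule imageI)
    then show "pick (N #> x) \<in> R \<and> x \<in> N #> pick (N #> x)"
      using pick_coset[OF x] rcos_self[OF x N] by simp
    fix r assume r: "r \<in> R \<and> x \<in> N #> r"
    then obtain a where a: "a \<in> carrier G" "r = pick (N #> a)"
      using R_elem by blast
    have "x \<in> N #> a"
      using r pick_coset[OF a(1)] a(2) by simp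
    then have "N #> a = N #> x"
      by (rule repr_independence[OF _ a(1) N])
    then show "r = pick (N #> x)" using a(2) by simp
  qed
  ultimately have "R \<subseteq> carrier G \<and> (\<forall>x\<in>carrier G. \<exists>!r. r \<in> R \<and> x \<in> N #> r)"
    by blast
  then show ?thesis
    unfolding right_transversal_def by (rule someI)
qed

lemma coset_rep_spec:
  assumes N: "subgroup N G" and x: "x \<in> carrier G"
  shows "coset_rep G N x \<in> right_transversal G N" "x \<in> N #> coset_rep G N x"
    and "\<And>r. r \<in> right_transversal G N \<Longrightarrow> x \<in> N #> r \<Longrightarrow> coset_rep G N x = r"
proof -
  have ex1: "\<exists>!r. r \<in> right_transversal G N \<and> x \<in> N #> r"
    using conjunct2[OF right_transversal_spec[OF N]] x by (rule bspec)
  then have "coset_rep G N x \<in> right_transversal G N \<and> x \<in> N #> coset_rep G N x"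
    unfolding coset_rep_def by (rule theI')
  then show "coset_rep G N x \<in> right_transversal G N" "x \<in> N #> coset_rep G N x"
    by simp_all
  show "coset_rep G N x = r" if "r \<in> right_transversal G N" "x \<in> N #> r" for r
    unfolding coset_rep_def using that by (intro the1_equality[OF ex1]) simp
qed

end

lemma r_coset_carrier_update [simp]: "r_coset (G\<lparr>carrier := S\<rparr>) = r_coset G"
  unfolding r_coset_def by simp

lemma to_int_mod_ring_nonneg: "to_int_mod_ring (c :: 'p::prime_card mod_ring) \<ge> 0"
  by transfer simp

lemma of_nat_nat_to_int_mod_ring [simp]:
  "of_nat (nat (to_int_mod_ring (c :: 'p::prime_card mod_ring))) = c"
  using to_int_mod_ring_nonneg[of c] unfolding of_nat_of_int_mod_ring by simp

context group
begin

lemma transversal_in_subgroup: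
  assumes S: "subgroup S G" and N: "subgroup N G" "N \<subseteq> S"
  defines "R \<equiv> right_transversal (G\<lparr>carrier := S\<rparr>) N"
  shows "R \<subseteq> S"
    and "\<And>x. x \<in> S \<Longrightarrow> coset_rep (G\<lparr>carrier := S\<rparr>) N x \<in> R"
    and "\<And>x. x \<in> S \<Longrightarrow> x \<in> N #> coset_rep (G\<lparr>carrier := S\<rparr>) N x"
    and "\<And>x r. x \<in> S \<Longrightarrow> r \<in> R \<Longrightarrow> x \<in> N #> r \<Longrightarrow> coset_rep (G\<lparr>carrier := S\<rparr>) N x = r"
proof -
  have K: "group (G\<lparr>carrier := S\<rparr>)" using S by (rule subgroup_imp_group)
  have NK: "subgroup N (G\<lparr>carrier := S\<rparr>)" using subgroup_incl[OF N(1) S N(2)] .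
  show "R \<subseteq> S"
    using conjunct1[OF group.right_transversal_spec[OF K NK]] unfolding R_def by simp
  fix x assume x: "x \<in> S"
  note spec = group.coset_rep_spec[OF K NK, simplified, OF x]
  show "coset_rep (G\<lparr>carrier := S\<rparr>) N x \<in> R" "x \<in> N #> coset_rep (G\<lparr>carrier := S\<rparr>) N x"
    using spec(1,2) unfolding R_def .
  show "coset_rep (G\<lparr>carrier := S\<rparr>) N x = r" if "r \<in> R" "x \<in> N #> r" for r
    using spec(3) that unfolding R_def .
qed

lemma cor1_self:
  assumes S: "subgroup S G" and \<phi>: "hom_on G S \<phi>" and g: "g \<in> S"
  shows "cor1 (G\<lparr>carrier := S\<rparr>) S \<phi> g = \<phi> g"
proof -
  let ?K = "G\<lparr>carrier := S\<rparr>"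
  let ?R = "right_transversal ?K S"
  note R = transversal_in_subgroup[OF S S order_refl]
  have rep_eq: "coset_rep ?K S x = r" if "x \<in> S" "r \<in> ?R" for x r
  proof -
    have "r \<in> S" using R(1) that(2) ..
    then have "x \<in> S #> r" using subgroup.rcos_const[OF S is_group] that(1) by simp
    then show ?thesis using R(4) that by blast
  qed
  define r0 where "r0 = coset_rep ?K S g"
  have "r0 \<in> ?R" unfolding r0_def using R(2)[OF g] .
  moreover have "r = r0" if "r \<in> ?R" for r
    unfolding r0_def by (rule rep_eq[OF g that, symmetric])
  ultimately have R0: "?R = {r0}" by blast
  have "r0 \<in> S" "r0 \<otimes> g \<in> S" using R0 R(1) g subgroup.m_closed[OF S] by auto
  moreover have "coset_rep ?K S (r0 \<otimes> g) = r0"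
    using rep_eq[OF \<open>r0 \<otimes> g \<in> S\<close>] R0 by simp
  ultimately have "cor1 ?K S \<phi> g = \<phi> (r0 \<otimes> g \<otimes> inv r0)"
    unfolding cor1_def R0 using m_inv_consistent[OF S] by simp
  also have "\<dots> = \<phi> g"
    using hom_on_mult_inv[OF S \<phi> \<open>r0 \<in> S\<close> g \<open>r0 \<in> S\<close>] by simp
  finally show ?thesis .
qed


lemma ker_on_transfer_term:
  fixes f :: "'a \<Rightarrow> 'p::prime_card mod_ring"
  assumes S: "subgroup S G" and f: "hom_on G S f" and t: "t \<in> S" "f t = 1" and g: "g \<in> S"
  shows "t [^] nat (to_int_mod_ring c) \<otimes> g \<otimes> inv (t [^] nat (to_int_mod_ring (c + f g)))
    \<in> ker_on S f"
proof -
  have pow: "t [^] (n::nat) \<in> S" "f (t [^] n) = of_nat n" for n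
    using subgroup_nat_pow_closed[OF S t(1)] hom_on_nat_pow[OF S f t(1)] t(2) by simp_all
  show ?thesis
    unfolding ker_on_def using hom_on_mult_inv[OF S f pow(1) g pow(1)] pow g S
    by (simp add: subgroup.m_closed subgroup.m_inv_closed)
qed

text \<open>Corestriction from the kernel of a surjective homomorphism f to F_p can be computed
  with the transversal of powers of any t with f t = 1; the summand for c is the transfer
  term of the coset of f-value c.\<close>
lemma cor1_ker_on:
  fixes f :: "'a \<Rightarrow> 'p::prime_card mod_ring"
  assumes S: "subgroup S G" and f: "hom_on G S f" and t: "t \<in> S" "f t = 1"
    and \<phi>: "hom_on G (ker_on S f) \<phi>" and g: "g \<in> S"
  shows "cor1 (G\<lparr>carrier := S\<rparr>) (ker_on S f) \<phi> g =
    (\<Sum>c\<in>UNIV. \<phi> (t [^] nat (to_int_mod_ring c) \<otimes> g \<otimes> inv (t [^] nat (to_int_mod_ring (c + f g)))))"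
proof -
  let ?K = "G\<lparr>carrier := S\<rparr>" and ?N = "ker_on S f"
  let ?R = "right_transversal ?K ?N" and ?rep = "coset_rep ?K ?N"
  define \<tau> where "\<tau> c = t [^] nat (to_int_mod_ring c)" for c :: "'p mod_ring"
  have N: "subgroup ?N G" using S f by (rule subgroup_ker_on)
  note R = transversal_in_subgroup[OF S N ker_on_subset]
  have coset: "x \<in> ?N #> r \<longleftrightarrow> x \<in> S \<and> f x = f r" if "r \<in> S" for x r
    using S f that by (rule ker_on_r_coset_iff)
  have rep: "?rep x \<in> ?R" "?rep x \<in> S" "f (?rep x) = f x" if "x \<in> S" for x
  proof -
    show "?rep x \<in> ?R" using R(2)[OF that] .
    then show "?rep x \<in> S" by (rule subsetD[OF R(1)])
    then show "f (?rep x) = f x" using R(3)[OF that] by (simp add: coset)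
  qed
  have rep_eq: "?rep x = r" if "x \<in> S" "r \<in> ?R" "f x = f r" for x r
  proof -
    have "r \<in> S" using that(2) by (rule subsetD[OF R(1)])
    then have "x \<in> ?N #> r" using that by (simp add: coset)
    then show ?thesis by (rule R(4)[OF that(1,2)])
  qed
  have \<tau>: "\<tau> c \<in> S" "f (\<tau> c) = c" for c
    unfolding \<tau>_def using subgroup_nat_pow_closed[OF S t(1)] hom_on_nat_pow[OF S f t(1)] t(2)
    by simp_all
  define s where "s c = ?rep (\<tau> c)" for c
  have s: "s c \<in> ?R" "s c \<in> S" "f (s c) = c" for c
    unfolding s_def using rep \<tau> by simp_all
  have bij: "bij_betw s UNIV ?R"
  proof (rule bij_betw_byWitness[where f' = f])
    show "\<forall>r\<in>?R. s (f r) = r"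
      unfolding s_def using rep_eq[OF \<tau>(1)] \<tau>(2) by simp
  qed (use s in auto)
  define n where "n c = s c \<otimes> inv (\<tau> c)" for c
  have n: "n c \<in> ?N" for c
  proof -
    have "f (n c) = f (s c) + f (inv (\<tau> c))"
      unfolding n_def using hom_onD[OF f s(2) subgroup.m_inv_closed[OF S \<tau>(1)]] .
    then have "f (n c) = 0"
      using hom_on_inv[OF S f \<tau>(1)] s(3) \<tau>(2) by simp
    moreover have "n c \<in> S"
      unfolding n_def using S s(2) \<tau>(1) by (simp add: subgroup.m_closed subgroup.m_inv_closed)
    ultimately show ?thesis unfolding ker_on_def by simp
  qed
  have carrier: "s c \<in> carrier G" "\<tau> c \<in> carrier G" "n c \<in> carrier G" for c
    using s(2) \<tau>(1) n subgroup.mem_carrier[OF S] subgroup.mem_carrier[OF N] by auto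
  have g_carrier: "g \<in> carrier G" using subgroup.mem_carrier[OF S g] .
  have s_n: "s c = n c \<otimes> \<tau> c" for c
    unfolding n_def using carrier by (simp add: m_assoc)
  define M where "M c = \<tau> c \<otimes> g \<otimes> inv (\<tau> (c + f g))" for c
  have M: "M c \<in> ?N" for c
    unfolding M_def \<tau>_def using S f t g by (rule ker_on_transfer_term)
  have summand: "\<phi> (s c \<otimes> g \<otimes> inv (?rep (s c \<otimes> g))) = \<phi> (n c) + \<phi> (M c) - \<phi> (n (c + f g))"
    for c
  proof -
    have sg: "s c \<otimes> g \<in> S" using subgroup.m_closed[OF S s(2) g] .
    have "?rep (s c \<otimes> g) = s (c + f g)"
      using rep_eq[OF sg s(1)] hom_onD[OF f s(2) g] s(3) by simp
    moreover have "s c \<otimes> g \<otimes> inv (s (c + f g)) = n c \<otimes> M c \<otimes> inv (n (c + f g))"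
      unfolding s_n M_def using carrier g_carrier by (simp add: m_assoc inv_mult_group)
    ultimately show ?thesis using hom_on_mult_inv[OF N \<phi> n M n] by simp
  qed
  have "cor1 ?K ?N \<phi> g = (\<Sum>r\<in>?R. \<phi> (r \<otimes> g \<otimes> inv (?rep (r \<otimes> g))))"
    unfolding cor1_def
  proof (rule sum.cong)
    fix r assume "r \<in> ?R"
    then have "?rep (r \<otimes> g) \<in> S" using rep(2) R(1) g subgroup.m_closed[OF S] by blast
    then show "\<phi> (r \<otimes>\<^bsub>?K\<^esub> g \<otimes>\<^bsub>?K\<^esub> inv\<^bsub>?K\<^esub> ?rep (r \<otimes>\<^bsub>?K\<^esub> g)) =
      \<phi> (r \<otimes> g \<otimes> inv (?rep (r \<otimes> g)))"
      using m_inv_consistent[OF S] by simp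
  qed simp
  also have "\<dots> = (\<Sum>c\<in>UNIV. \<phi> (s c \<otimes> g \<otimes> inv (?rep (s c \<otimes> g))))"
    by (rule sum.reindex_bij_betw[OF bij, symmetric])
  also have "\<dots> = (\<Sum>c\<in>UNIV. \<phi> (n c)) + (\<Sum>c\<in>UNIV. \<phi> (M c)) - (\<Sum>c\<in>UNIV. \<phi> (n (c + f g)))"
    unfolding summand by (simp add: sum.distrib sum_subtractf)
  also have "(\<Sum>c\<in>UNIV. \<phi> (n (c + f g))) = (\<Sum>c\<in>UNIV. \<phi> (n c))"
    by (rule sum.reindex_bij_betw[OF bij_plus_right])
  finally show ?thesis by (simp add: M_def \<tau>_def)
qed

text \<open>Corestriction commutes with enlarging S to U when the homomorphism extends with the
  same image: if f is onto, both sides are computed by the formula of cor1_ker_on with the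
  same t taken in S, and all transfer terms lie in the smaller kernel.\<close>
lemma cor1_ker_on_extend:
  fixes f fU :: "'a \<Rightarrow> 'p::prime_card mod_ring"
  assumes S: "subgroup S G" and U: "subgroup U G" "S \<subseteq> U"
    and f: "hom_on G S f" and fU: "hom_on G U fU" "\<And>x. x \<in> S \<Longrightarrow> fU x = f x"
    and im: "fU ` U \<subseteq> f ` S"
    and \<phi>: "hom_on G (ker_on S f) \<phi>" and \<phi>U: "hom_on G (ker_on U fU) \<phi>U"
    and \<phi>_eq: "\<And>n. n \<in> ker_on S f \<Longrightarrow> \<phi>U n = \<phi> n"
    and g: "g \<in> S"
  shows "cor1 (G\<lparr>carrier := U\<rparr>) (ker_on U fU) \<phi>U g = cor1 (G\<lparr>carrier := S\<rparr>) (ker_on S f) \<phi> g"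
proof (cases "\<exists>t\<in>S. f t \<noteq> 0")
  case False
  then have kS: "ker_on S f = S"
    unfolding ker_on_def by auto
  have "f ` S \<subseteq> {0}" using False by auto
  with im have "fU ` U \<subseteq> {0}" by (rule order_trans)
  then have kU: "ker_on U fU = U"
    unfolding ker_on_def by blast
  have "cor1 (G\<lparr>carrier := U\<rparr>) (ker_on U fU) \<phi>U g = \<phi>U g"
    using cor1_self[OF U(1) _ subsetD[OF U(2) g], of \<phi>U] \<phi>U unfolding kU by simp
  also have "\<dots> = \<phi> g"
    using \<phi>_eq g kS by simp
  also have "\<dots> = cor1 (G\<lparr>carrier := S\<rparr>) (ker_on S f) \<phi> g"
    using cor1_self[OF S _ g, of \<phi>] \<phi> unfolding kS by simp
  finally show ?thesis .
next
  case True
  then obtain t0 where t0: "t0 \<in> S" "f t0 \<noteq> 0" by blast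
  define t where "t = t0 [^] nat (to_int_mod_ring (inverse (f t0)))"
  have t: "t \<in> S" "f t = 1"
    unfolding t_def using subgroup_nat_pow_closed[OF S t0(1)] hom_on_nat_pow[OF S f t0(1)] t0(2)
    by simp_all
  have tU: "t \<in> U" "fU t = 1" using t U(2) fU(2) by auto
  show ?thesis
    unfolding cor1_ker_on[OF U(1) fU(1) tU \<phi>U subsetD[OF U(2) g]] cor1_ker_on[OF S f t \<phi> g]
    using \<phi>_eq[OF ker_on_transfer_term[OF S f t g]] fU(2)[OF g] by simp
qed


end

lemma continuous_map_discrete_iff_locally_constant:
  "continuous_map X (discrete_topology UNIV) f \<longleftrightarrow>
    (\<forall>x\<in>topspace X. \<exists>U. openin X U \<and> x \<in> U \<and> (\<forall>y\<in>U. f y = f x))"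
proof
  assume f: "continuous_map X (discrete_topology UNIV) f"
  show "\<forall>x\<in>topspace X. \<exists>U. openin X U \<and> x \<in> U \<and> (\<forall>y\<in>U. f y = f x)"
  proof
    fix x assume x: "x \<in> topspace X"
    have "openin X {y \<in> topspace X. f y \<in> {f x}}"
      using f by (rule openin_continuous_map_preimage) simp
    then show "\<exists>U. openin X U \<and> x \<in> U \<and> (\<forall>y\<in>U. f y = f x)"
      using x by (intro exI[of _ "{y \<in> topspace X. f y \<in> {f x}}"]) simp
  qed
next
  assume loc: "\<forall>x\<in>topspace X. \<exists>U. openin X U \<and> x \<in> U \<and> (\<forall>y\<in>U. f y = f x)"
  show "continuous_map X (discrete_topology UNIV) f"
    unfolding continuous_map_openin_preimage_eq
  proof (intro conjI allI impI)
    fix V :: "'b set"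
    show "openin X (topspace X \<inter> f -` V)"
    proof (subst openin_subopen, intro ballI)
      fix x assume x: "x \<in> topspace X \<inter> f -` V"
      then obtain U where U: "openin X U" "x \<in> U" "\<forall>y\<in>U. f y = f x"
        using loc by blast
      have "U \<subseteq> topspace X \<inter> f -` V"
        using openin_subset[OF U(1)] U(3) x by auto
      then show "\<exists>U. openin X U \<and> x \<in> U \<and> U \<subseteq> topspace X \<inter> f -` V"
        using U(1,2) by blast
    qed
  qed simp
qed

context group
begin

lemma topological_group_topspace: "topological_group G T \<Longrightarrow> topspace T = carrier G"
  unfolding topological_group_def by simp

lemma topological_group_mult:
  "topological_group G T \<Longrightarrow> continuous_map (prod_topology T T) T (\<lambda>(x, y). x \<otimes> y)"
  unfolding topological_group_def by simp

lemma topological_group_inv: "topological_group G T \<Longrightarrow> continuous_map T T (\<lambda>x. inv x)"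
  unfolding topological_group_def by simp

lemma continuous_map_mult_left:
  assumes tg: "topological_group G T" and a: "a \<in> carrier G"
  shows "continuous_map T T (\<lambda>x. a \<otimes> x)"
proof -
  have "continuous_map T (prod_topology T T) (\<lambda>x. (a, x))"
    using a topological_group_topspace[OF tg] by (intro continuous_map_pairedI) auto
  then have "continuous_map T T ((\<lambda>(x, y). x \<otimes> y) \<circ> (\<lambda>x. (a, x)))"
    using topological_group_mult[OF tg] by (rule continuous_map_compose)
  then show ?thesis by (simp add: o_def)
qed

lemma continuous_map_mult_right:
  assumes tg: "topological_group G T" and a: "a \<in> carrier G"
  shows "continuous_map T T (\<lambda>x. x \<otimes> a)"
proof -
  have "continuous_map T (prod_topology T T) (\<lambda>x. (x, a))"
    using a topological_group_topspace[OF tg] by (intro continuous_map_pairedI) auto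
  then have "continuous_map T T ((\<lambda>(x, y). x \<otimes> y) \<circ> (\<lambda>x. (x, a)))"
    using topological_group_mult[OF tg] by (rule continuous_map_compose)
  then show ?thesis by (simp add: o_def)
qed

lemma openin_r_coset:
  assumes tg: "topological_group G T" and V: "openin T V" and a: "a \<in> carrier G"
  shows "openin T (V #> a)"
proof -
  have V_carrier: "V \<subseteq> carrier G"
    using openin_subset[OF V] topological_group_topspace[OF tg] by simp
  have "V #> a = {x \<in> topspace T. x \<otimes> inv a \<in> V}"
  proof (intro equalityI subsetI)
    fix x assume "x \<in> V #> a"
    then obtain v where v: "v \<in> V" "x = v \<otimes> a" unfolding r_coset_def by auto
    have "v \<in> carrier G" using V_carrier v(1) ..
    then show "x \<in> {x \<in> topspace T. x \<otimes> inv a \<in> V}"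
      using v a topological_group_topspace[OF tg] by (simp add: m_assoc)
  next
    fix x assume x: "x \<in> {x \<in> topspace T. x \<otimes> inv a \<in> V}"
    then have "x \<in> carrier G" using topological_group_topspace[OF tg] by simp
    then have "x \<otimes> inv a \<otimes> a = x" using a by (simp add: m_assoc)
    moreover have "x \<otimes> inv a \<otimes> a \<in> V #> a" using x V_carrier a by (intro rcosI) simp_all
    ultimately show "x \<in> V #> a" by simp
  qed
  also have "openin T \<dots>"
    using continuous_map_mult_right[OF tg inv_closed[OF a]] V by (rule openin_continuous_map_preimage)
  finally show ?thesis .
qed

lemma openin_l_coset:
  assumes tg: "topological_group G T" and V: "openin T V" and a: "a \<in> carrier G"
  shows "openin T (a <# V)"
proof -
  have V_carrier: "V \<subseteq> carrier G"
    using openin_subset[OF V] topological_group_topspace[OF tg] by simp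
  have "a <# V = {x \<in> topspace T. inv a \<otimes> x \<in> V}"
  proof (intro equalityI subsetI)
    fix x assume "x \<in> a <# V"
    then obtain v where v: "v \<in> V" "x = a \<otimes> v" unfolding l_coset_def by auto
    have "v \<in> carrier G" using V_carrier v(1) ..
    then show "x \<in> {x \<in> topspace T. inv a \<otimes> x \<in> V}"
      using v a topological_group_topspace[OF tg] by (simp add: m_assoc[symmetric])
  next
    fix x assume x: "x \<in> {x \<in> topspace T. inv a \<otimes> x \<in> V}"
    then have "x \<in> carrier G" using topological_group_topspace[OF tg] by simp
    then have "a \<otimes> (inv a \<otimes> x) = x" using a by (simp add: m_assoc[symmetric])
    moreover have "a \<otimes> (inv a \<otimes> x) \<in> a <# V" unfolding l_coset_def using x by auto
    ultimately show "x \<in> a <# V" by simp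
  qed
  also have "openin T \<dots>"
    using continuous_map_mult_left[OF tg inv_closed[OF a]] V by (rule openin_continuous_map_preimage)
  finally show ?thesis .
qed

lemma openin_subgroup_if_nbhd:
  assumes tg: "topological_group G T" and V: "subgroup V G"
    and B: "openin T B" "\<one> \<in> B" "B \<subseteq> V"
  shows "openin T V"
proof (subst openin_subopen, intro ballI)
  fix x assume x: "x \<in> V"
  have x_carrier: "x \<in> carrier G" using subgroup.mem_carrier[OF V x] .
  have "B #> x \<subseteq> V"
    unfolding r_coset_def using B(3) subgroup.m_closed[OF V _ x] by auto
  moreover have "\<one> \<otimes> x \<in> B #> x"
    using B(2,3) subgroup.subset[OF V] x_carrier by (intro rcosI) auto
  then have "x \<in> B #> x" using x_carrier by simp
  ultimately show "\<exists>U. openin T U \<and> x \<in> U \<and> U \<subseteq> V"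
    using openin_r_coset[OF tg B(1) x_carrier] by blast
qed

lemma profinite_clopen_nbhd:
  assumes pg: "profinite_group G T" and W: "openin T W" "\<one> \<in> W"
  shows "\<exists>K. openin T K \<and> closedin T K \<and> \<one> \<in> K \<and> K \<subseteq> W"
proof -
  have tg: "topological_group G T" and cs: "compact_space T" and hs: "Hausdorff_space T"
    and td: "totally_disconnected_space T"
    using pg unfolding profinite_group_def by auto
  have one: "\<one> \<in> topspace T" using topological_group_topspace[OF tg] by simp
  have "connectedin T (connected_component_of_set T \<one>)"
    by (rule connectedin_connected_component_of)
  then obtain x where "connected_component_of_set T \<one> \<subseteq> {x}"
    using td unfolding totally_disconnected_space_def by blast
  moreover have "\<one> \<in> connected_component_of_set T \<one>"
    using one connected_component_of_refl by fastforce
  ultimately have "connected_component_of_set T \<one> = {\<one>}" by blast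
  then have C: "{\<one>} \<in> connected_components_of T"
    unfolding connected_components_of_def using one by (metis image_eqI)
  obtain U V where UV: "openin T U" "openin T V" "disjnt U V" "U \<union> V = topspace T"
      "{\<one>} \<subseteq> U" "U \<subseteq> W"
    using wilder_locally_compact_component_thm[OF compact_imp_locally_compact_space[OF cs] hs C]
      one W by auto
  have "U = topspace T - V"
    using UV(3,4) by (auto simp: disjnt_def)
  then have "closedin T U"
    using closedin_diff[OF closedin_topspace UV(2)] by simp
  then show ?thesis using UV by auto
qed

text \<open>Tube lemma for the compact set K \<times> {1} inside the preimage of K under multiplication.\<close>
lemma compact_clopen_right_stable_nbhd:
  assumes tg: "topological_group G T" and cs: "compact_space T"
    and K: "openin T K" "closedin T K"
  shows "\<exists>B. openin T B \<and> \<one> \<in> B \<and> (\<forall>k\<in>K. \<forall>b\<in>B. k \<otimes> b \<in> K)"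
proof -
  have top: "topspace T = carrier G" using tg by (rule topological_group_topspace)
  define Q where "Q = {z \<in> topspace (prod_topology T T). (\<lambda>(x, y). x \<otimes> y) z \<in> K}"
  have Q: "openin (prod_topology T T) Q"
    unfolding Q_def by (rule openin_continuous_map_preimage[OF topological_group_mult[OF tg] K(1)])
  have KQ: "K \<times> {\<one>} \<subseteq> Q"
  proof
    fix z assume "z \<in> K \<times> {\<one>}"
    then obtain k where k: "k \<in> K" "z = (k, \<one>)" by blast
    have "k \<in> carrier G" using openin_subset[OF K(1)] k(1) top by blast
    then show "z \<in> Q" unfolding Q_def using k top by simp
  qed
  have "\<one> \<in> topspace T" using top by simp
  then obtain U B where UB: "openin T B" "K \<subseteq> U" "\<one> \<in> B" "U \<times> B \<subseteq> Q"
    using tube_lemma_left[OF Q closedin_compact_space[OF cs K(2)] _ KQ] by blast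
  have "k \<otimes> b \<in> K" if "k \<in> K" "b \<in> B" for k b
  proof -
    have "(k, b) \<in> Q" using UB(2,4) that by blast
    then show ?thesis unfolding Q_def by simp
  qed
  then show ?thesis using UB(1,3) by blast
qed

lemma profinite_open_subgroup_in:
  assumes pg: "profinite_group G T" and W: "openin T W" "\<one> \<in> W"
  shows "\<exists>V. subgroup V G \<and> openin T V \<and> V \<subseteq> W"
proof -
  have tg: "topological_group G T" and cs: "compact_space T"
    using pg unfolding profinite_group_def by auto
  have top: "topspace T = carrier G" using tg by (rule topological_group_topspace)
  obtain K where K: "openin T K" "closedin T K" "\<one> \<in> K" "K \<subseteq> W"
    using profinite_clopen_nbhd[OF pg W] by blast
  have K_carrier: "K \<subseteq> carrier G" using openin_subset[OF K(1)] top by simp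
  obtain B where B: "openin T B" "\<one> \<in> B" "\<forall>k\<in>K. \<forall>b\<in>B. k \<otimes> b \<in> K"
    using compact_clopen_right_stable_nbhd[OF tg cs K(1,2)] by blast
  define B' where "B' = B \<inter> {y \<in> topspace T. inv y \<in> B}"
  have "openin T {y \<in> topspace T. inv y \<in> B}"
    by (rule openin_continuous_map_preimage[OF topological_group_inv[OF tg] B(1)])
  with B(1) have B': "openin T B'" "\<one> \<in> B'"
    unfolding B'_def using B(2) top by (auto intro: openin_Int)
  define V where "V = {g \<in> carrier G. \<forall>k\<in>K. k \<otimes> g \<in> K \<and> k \<otimes> inv g \<in> K}"
  have V: "subgroup V G"
  proof (rule subgroupI)
    show "V \<subseteq> carrier G" unfolding V_def by blast
    have "\<one> \<in> V" unfolding V_def using K_carrier by auto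
    then show "V \<noteq> {}" by blast
    fix a b assume "a \<in> V" "b \<in> V"
    then have ab: "a \<in> carrier G" "b \<in> carrier G"
      "\<And>k. k \<in> K \<Longrightarrow> k \<otimes> a \<in> K \<and> k \<otimes> inv a \<in> K"
      "\<And>k. k \<in> K \<Longrightarrow> k \<otimes> b \<in> K \<and> k \<otimes> inv b \<in> K"
      unfolding V_def by auto
    show "inv a \<in> V" unfolding V_def using ab by auto
    have "k \<otimes> (a \<otimes> b) \<in> K \<and> k \<otimes> inv (a \<otimes> b) \<in> K" if k: "k \<in> K" for k
    proof -
      have "k \<otimes> a \<otimes> b \<in> K" "k \<otimes> inv b \<otimes> inv a \<in> K"
        using ab(3,4) k by blast+
      moreover have "k \<in> carrier G" using k K_carrier by blast
      ultimately show ?thesis using ab(1,2) by (simp add: m_assoc inv_mult_group)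
    qed
    then show "a \<otimes> b \<in> V" unfolding V_def using ab by auto
  qed
  have "B' \<subseteq> V"
    unfolding B'_def V_def using B(3) top by auto
  then have "openin T V"
    using openin_subgroup_if_nbhd[OF tg V B'] by blast
  moreover have "V \<subseteq> K"
  proof
    fix g assume "g \<in> V"
    then have "\<one> \<otimes> g \<in> K" "g \<in> carrier G" unfolding V_def using K(3) by auto
    then show "g \<in> K" by simp
  qed
  ultimately show ?thesis using V K(4) by blast
qed

end


lemma compactin_pointwise_cover:
  assumes "compactin X S" "\<And>s. s \<in> S \<Longrightarrow> openin X (C s)" "\<And>s. s \<in> S \<Longrightarrow> s \<in> C s"
  shows "\<exists>F. finite F \<and> F \<subseteq> S \<and> S \<subseteq> \<Union>(C ` F)"
proof -
  have "\<forall>U\<in>C ` S. openin X U" "S \<subseteq> \<Union>(C ` S)" using assms(2,3) by auto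
  then obtain \<U> where \<U>: "finite \<U>" "\<U> \<subseteq> C ` S" "S \<subseteq> \<Union>\<U>"
    using assms(1) unfolding compactin_def by meson
  then obtain F where "F \<subseteq> S" "finite F" "\<U> = C ` F"
    using finite_subset_image by meson
  then show ?thesis using \<U>(3) by blast
qed

context group
begin

lemma m_inv_cancel_left: "x \<in> carrier G \<Longrightarrow> y \<in> carrier G \<Longrightarrow> x \<otimes> (inv x \<otimes> y) = y"
  by (simp add: m_assoc[symmetric])

lemma inv_m_cancel_left: "x \<in> carrier G \<Longrightarrow> y \<in> carrier G \<Longrightarrow> inv x \<otimes> (x \<otimes> y) = y"
  by (simp add: m_assoc[symmetric])

lemma normal_core:
  assumes V: "subgroup V G"
  shows "{w \<in> carrier G. \<forall>g\<in>carrier G. inv g \<otimes> w \<otimes> g \<in> V} \<lhd> G"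
    (is "?N \<lhd> G")
  unfolding normal_inv_iff
proof (intro conjI ballI)
  have conj_mult: "inv g \<otimes> (a \<otimes> b) \<otimes> g = (inv g \<otimes> a \<otimes> g) \<otimes> (inv g \<otimes> b \<otimes> g)"
    if "g \<in> carrier G" "a \<in> carrier G" "b \<in> carrier G" for g a b
    using that by (simp add: m_assoc m_inv_cancel_left)
  have conj_inv: "inv g \<otimes> inv a \<otimes> g = inv (inv g \<otimes> a \<otimes> g)"
    if "g \<in> carrier G" "a \<in> carrier G" for g a
    using that by (simp add: m_assoc inv_mult_group)
  show "subgroup ?N G"
  proof (rule subgroupI)
    show "?N \<subseteq> carrier G" by blast
    have "\<one> \<in> ?N" using subgroup.one_closed[OF V] by simp
    then show "?N \<noteq> {}" by blast
  next
    fix a assume "a \<in> ?N"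
    then show "inv a \<in> ?N"
      using conj_inv subgroup.m_inv_closed[OF V] by simp
  next
    fix a b assume "a \<in> ?N" "b \<in> ?N"
    then show "a \<otimes> b \<in> ?N"
      using conj_mult subgroup.m_closed[OF V] by simp
  qed
  fix x h assume x: "x \<in> carrier G" and h: "h \<in> ?N"
  have "inv g \<otimes> (x \<otimes> h \<otimes> inv x) \<otimes> g = inv (inv x \<otimes> g) \<otimes> h \<otimes> (inv x \<otimes> g)"
    if "g \<in> carrier G" for g
    using that x h by (simp add: m_assoc inv_mult_group)
  then show "x \<otimes> h \<otimes> inv x \<in> ?N"
    using x h by simp
qed

lemma compact_open_subgroup_normal_core:
  assumes tg: "topological_group G T" and cs: "compact_space T"
    and V: "subgroup V G" "openin T V"
  shows "\<exists>N. N \<lhd> G \<and> openin T N \<and> N \<subseteq> V"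
proof -
  have top: "topspace T = carrier G" using tg by (rule topological_group_topspace)
  define N where "N = {w \<in> carrier G. \<forall>g\<in>carrier G. inv g \<otimes> w \<otimes> g \<in> V}"
  define C where "C x = {w \<in> topspace T. inv x \<otimes> w \<otimes> x \<in> V}" for x
  have C_open: "openin T (C x)" if "x \<in> carrier G" for x
  proof -
    have "continuous_map T T ((\<lambda>w. w \<otimes> x) \<circ> (\<lambda>w. inv x \<otimes> w))"
      using continuous_map_mult_left[OF tg inv_closed[OF that]] continuous_map_mult_right[OF tg that]
      by (rule continuous_map_compose)
    then show ?thesis
      unfolding C_def using V(2) by (auto intro: openin_continuous_map_preimage simp: o_def)
  qed
  have "compactin T (carrier G)" using cs top unfolding compact_space_def by simp
  moreover have "x \<in> x <# V" if "x \<in> carrier G" for x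
  proof -
    have "x \<otimes> \<one> \<in> x <# V"
      unfolding l_coset_def by (rule UN_I[OF subgroup.one_closed[OF V(1)]]) simp
    then show ?thesis using that by simp
  qed
  ultimately obtain F where F: "finite F" "F \<subseteq> carrier G" "carrier G \<subseteq> \<Union>((\<lambda>x. x <# V) ` F)"
    using compactin_pointwise_cover[of T "carrier G" "\<lambda>x. x <# V"] openin_l_coset[OF tg V(2)]
    by blast
  have "N = (\<Inter>x\<in>F. C x) \<inter> topspace T"
  proof (intro equalityI subsetI)
    fix w assume "w \<in> N"
    then show "w \<in> (\<Inter>x\<in>F. C x) \<inter> topspace T"
      unfolding N_def C_def using F(2) top by auto
  next
    fix w assume w: "w \<in> (\<Inter>x\<in>F. C x) \<inter> topspace T"
    have "inv g \<otimes> w \<otimes> g \<in> V" if g: "g \<in> carrier G" for g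
    proof -
      obtain x where x: "x \<in> F" "g \<in> x <# V" using F(3) g by blast
      then obtain u where u: "u \<in> V" "g = x \<otimes> u" unfolding l_coset_def by auto
      have carrier: "x \<in> carrier G" "u \<in> carrier G" "w \<in> carrier G"
        using x(1) F(2) subgroup.mem_carrier[OF V(1) u(1)] w top by auto
      have "inv x \<otimes> w \<otimes> x \<in> V" using w x(1) unfolding C_def by blast
      then have "inv u \<otimes> (inv x \<otimes> w \<otimes> x) \<otimes> u \<in> V"
        using u(1) V(1) by (simp add: subgroup.m_closed subgroup.m_inv_closed)
      then show ?thesis
        using u(2) carrier by (simp add: m_assoc inv_mult_group)
    qed
    then show "w \<in> N" unfolding N_def using w top by simp
  qed
  then have "openin T N" using F(1) C_open F(2) by (auto intro: openin_INT)
  moreover have "N \<subseteq> V"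
  proof
    fix w assume "w \<in> N"
    then have "inv \<one> \<otimes> w \<otimes> \<one> \<in> V" "w \<in> carrier G" unfolding N_def by auto
    then show "w \<in> V" by simp
  qed
  ultimately show ?thesis using normal_core[OF V(1)] unfolding N_def by blast
qed

lemma profinite_open_normal_subgroup_in:
  assumes pg: "profinite_group G T" and W: "openin T W" "\<one> \<in> W"
  shows "\<exists>N. N \<lhd> G \<and> openin T N \<and> N \<subseteq> W"
proof -
  obtain V where V: "subgroup V G" "openin T V" "V \<subseteq> W"
    using profinite_open_subgroup_in[OF pg W] by blast
  moreover have "topological_group G T" "compact_space T"
    using pg unfolding profinite_group_def by auto
  ultimately show ?thesis
    using compact_open_subgroup_normal_core by (meson order_trans)
qed

end

definition cochain1_on :: "'a topology \<Rightarrow> 'a set \<Rightarrow> ('a \<Rightarrow> 'c) \<Rightarrow> bool" where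
  "cochain1_on T S d \<longleftrightarrow> continuous_map (subtopology T S) (discrete_topology UNIV) d"

definition cochain2_on :: "'a topology \<Rightarrow> 'a set \<Rightarrow> ('a \<times> 'a \<Rightarrow> 'c) \<Rightarrow> bool" where
  "cochain2_on T S f \<longleftrightarrow>
    continuous_map (prod_topology (subtopology T S) (subtopology T S)) (discrete_topology UNIV) f"

definition left_invariant_on :: "('a,'b) monoid_scheme \<Rightarrow> 'a set \<Rightarrow> 'a set \<Rightarrow> ('a \<Rightarrow> 'c) \<Rightarrow> bool"
  where "left_invariant_on G S W d \<longleftrightarrow>
    (\<forall>s\<in>S. \<forall>w\<in>W. w \<otimes>\<^bsub>G\<^esub> s \<in> S \<longrightarrow> d (w \<otimes>\<^bsub>G\<^esub> s) = d s)"

definition left_invariant2_on ::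
    "('a,'b) monoid_scheme \<Rightarrow> 'a set \<Rightarrow> 'a set \<Rightarrow> ('a \<times> 'a \<Rightarrow> 'c) \<Rightarrow> bool"
  where "left_invariant2_on G S W f \<longleftrightarrow> (\<forall>a\<in>S. \<forall>b\<in>S. \<forall>v\<in>W. \<forall>w\<in>W.
    v \<otimes>\<^bsub>G\<^esub> a \<in> S \<longrightarrow> w \<otimes>\<^bsub>G\<^esub> b \<in> S \<longrightarrow> f (v \<otimes>\<^bsub>G\<^esub> a, w \<otimes>\<^bsub>G\<^esub> b) = f (a, b))"

lemma left_invariant_on_mono: "left_invariant_on G S W d \<Longrightarrow> V \<subseteq> W \<Longrightarrow> left_invariant_on G S V d"
  unfolding left_invariant_on_def by blast

lemma left_invariant2_on_mono:
  "left_invariant2_on G S W f \<Longrightarrow> V \<subseteq> W \<Longrightarrow> left_invariant2_on G S V f"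
  unfolding left_invariant2_on_def by blast

context group
begin

lemma cochain2_on_locally_invariant:
  assumes pg: "profinite_group G T" and S: "S \<subseteq> carrier G" and f: "cochain2_on T S f"
    and ab: "a \<in> S" "b \<in> S"
  shows "\<exists>V. subgroup V G \<and> openin T V \<and>
    (\<forall>u\<in>V. \<forall>u'\<in>V. u \<otimes> a \<in> S \<longrightarrow> u' \<otimes> b \<in> S \<longrightarrow> f (u \<otimes> a, u' \<otimes> b) = f (a, b))"
proof -
  have tg: "topological_group G T" using pg unfolding profinite_group_def by blast
  have top: "topspace T = carrier G" using tg by (rule topological_group_topspace)
  have "(a, b) \<in> topspace (prod_topology (subtopology T S) (subtopology T S))"
    using ab S top by auto
  then have "\<exists>Q. openin (prod_topology (subtopology T S) (subtopology T S)) Q \<and> (a, b) \<in> Q \<and>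
      (\<forall>z\<in>Q. f z = f (a, b))"
    using f unfolding cochain2_on_def continuous_map_discrete_iff_locally_constant
    by (rule bspec[rotated])
  then obtain Q where Q: "openin (prod_topology (subtopology T S) (subtopology T S)) Q"
      "(a, b) \<in> Q" "\<forall>z\<in>Q. f z = f (a, b)"
    by blast
  obtain A' B' where AB': "openin (subtopology T S) A'" "openin (subtopology T S) B'"
      "a \<in> A'" "b \<in> B'" "A' \<times> B' \<subseteq> Q"
    using Q(1)[unfolded openin_prod_topology_alt, rule_format, OF Q(2)] by blast
  obtain A where A: "openin T A" "A' = A \<inter> S"
    using AB'(1)[unfolded openin_subtopology] by blast
  obtain B where B: "openin T B" "B' = B \<inter> S"
    using AB'(2)[unfolded openin_subtopology] by blast
  define P where "P = {y \<in> topspace T. y \<otimes> a \<in> A} \<inter> {y \<in> topspace T. y \<otimes> b \<in> B}"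
  have "openin T P"
    unfolding P_def using S ab
    by (intro openin_Int openin_continuous_map_preimage[OF continuous_map_mult_right[OF tg]] A(1) B(1))
      auto
  moreover have "\<one> \<in> P" unfolding P_def using AB'(3,4) A(2) B(2) S ab top by auto
  ultimately obtain V where V: "subgroup V G" "openin T V" "V \<subseteq> P"
    using profinite_open_subgroup_in[OF pg] by blast
  have "f (u \<otimes> a, u' \<otimes> b) = f (a, b)"
    if "u \<in> V" "u' \<in> V" "u \<otimes> a \<in> S" "u' \<otimes> b \<in> S" for u u'
  proof -
    have "u \<otimes> a \<in> A'" "u' \<otimes> b \<in> B'" using that V(3) A(2) B(2) unfolding P_def by auto
    then show ?thesis using AB'(5) Q(3) by blast
  qed
  then show ?thesis using V(1,2) by blast
qed

lemma cochain2_on_uniformly_invariant: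
  assumes pg: "profinite_group G T" and S: "closedin T S" and f: "cochain2_on T S f"
  shows "\<exists>W. W \<lhd> G \<and> openin T W \<and> left_invariant2_on G S W f"
proof -
  have tg: "topological_group G T" and cs: "compact_space T"
    using pg unfolding profinite_group_def by auto
  have top: "topspace T = carrier G" using tg by (rule topological_group_topspace)
  have S_carrier: "S \<subseteq> carrier G" using closedin_subset[OF S] top by simp
  have "\<forall>z\<in>S \<times> S. \<exists>V. subgroup V G \<and> openin T V \<and> (\<forall>u\<in>V. \<forall>u'\<in>V.
      u \<otimes> fst z \<in> S \<longrightarrow> u' \<otimes> snd z \<in> S \<longrightarrow> f (u \<otimes> fst z, u' \<otimes> snd z) = f z)"
    using cochain2_on_locally_invariant[OF pg S_carrier f] by (auto simp: mem_Times_iff)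
  then obtain Vz where Vz: "\<And>z. z \<in> S \<times> S \<Longrightarrow> subgroup (Vz z) G \<and> openin T (Vz z) \<and>
      (\<forall>u\<in>Vz z. \<forall>u'\<in>Vz z. u \<otimes> fst z \<in> S \<longrightarrow> u' \<otimes> snd z \<in> S \<longrightarrow>
        f (u \<otimes> fst z, u' \<otimes> snd z) = f z)"
    by metis
  define box where "box z = (Vz z #> fst z) \<times> (Vz z #> snd z)" for z
  have "compactin (prod_topology T T) (S \<times> S)"
    using closedin_compact_space[OF cs S] by (simp add: compactin_Times)
  moreover have "openin (prod_topology T T) (box z)" "z \<in> box z" if "z \<in> S \<times> S" for z
  proof -
    have z: "fst z \<in> carrier G" "snd z \<in> carrier G" using that S_carrier by auto
    show "openin (prod_topology T T) (box z)"
      unfolding box_def using openin_r_coset[OF tg conjunct1[OF conjunct2[OF Vz[OF that]]]] z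
      by (simp add: openin_prod_Times_iff)
    have "fst z \<in> Vz z #> fst z" "snd z \<in> Vz z #> snd z"
      using rcos_self[OF z(1)] rcos_self[OF z(2)] conjunct1[OF Vz[OF that]] by simp_all
    then show "z \<in> box z" unfolding box_def by (simp add: mem_Times_iff)
  qed
  ultimately obtain F where F: "finite F" "F \<subseteq> S \<times> S" "S \<times> S \<subseteq> \<Union>(box ` F)"
    using compactin_pointwise_cover[of "prod_topology T T" "S \<times> S" box] by blast
  define V where "V = (\<Inter>z\<in>F. Vz z) \<inter> carrier G"
  have "subgroup (\<Inter>(insert (carrier G) (Vz ` F))) G"
  proof (rule subgroups_Inter)
    fix H assume "H \<in> insert (carrier G) (Vz ` F)"
    then show "subgroup H G" using subgroup_self Vz F(2) by auto
  qed simp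
  moreover have "\<Inter>(insert (carrier G) (Vz ` F)) = V" unfolding V_def by auto
  ultimately have "subgroup V G" by simp
  moreover have "openin T V"
    unfolding V_def top[symmetric] by (rule openin_INT[OF F(1)]) (use Vz F(2) in auto)
  moreover have "left_invariant2_on G S V f"
    unfolding left_invariant2_on_def
  proof (intro ballI impI)
    fix a b v w assume ab: "a \<in> S" "b \<in> S" and vw: "v \<in> V" "w \<in> V"
      and S_mult: "v \<otimes> a \<in> S" "w \<otimes> b \<in> S"
    obtain z where z: "z \<in> F" "(a, b) \<in> box z" using F(3) ab by blast
    have zS: "z \<in> S \<times> S" using z(1) F(2) by blast
    note Vz_z = Vz[OF zS]
    obtain u u' where u: "u \<in> Vz z" "u' \<in> Vz z" "a = u \<otimes> fst z" "b = u' \<otimes> snd z"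
      using z(2) unfolding box_def r_coset_def by auto
    have carrier: "u \<in> carrier G" "u' \<in> carrier G" "v \<in> carrier G" "w \<in> carrier G"
        "fst z \<in> carrier G" "snd z \<in> carrier G"
      using u vw z(1) zS S_carrier Vz_z subgroup.subset unfolding V_def by (auto dest: subsetD)
    have vu: "v \<otimes> u \<in> Vz z" "w \<otimes> u' \<in> Vz z"
      using vw z(1) u Vz_z unfolding V_def by (auto intro: subgroup.m_closed)
    have "f (v \<otimes> a, w \<otimes> b) = f ((v \<otimes> u) \<otimes> fst z, (w \<otimes> u') \<otimes> snd z)"
      using u(3,4) carrier by (simp add: m_assoc)
    also have "\<dots> = f z"
    proof -
      have "(v \<otimes> u) \<otimes> fst z \<in> S" "(w \<otimes> u') \<otimes> snd z \<in> S"
        using S_mult u(3,4) carrier by (simp_all add: m_assoc)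
      then show ?thesis using conjunct2[OF conjunct2[OF Vz_z]] vu by blast
    qed
    also have "\<dots> = f (a, b)"
      using Vz_z u ab by simp
    finally show "f (v \<otimes> a, w \<otimes> b) = f (a, b)" .
  qed
  ultimately obtain W where "W \<lhd> G" "openin T W" "W \<subseteq> V"
    using compact_open_subgroup_normal_core[OF tg cs] by blast
  then show ?thesis
    using left_invariant2_on_mono[OF \<open>left_invariant2_on G S V f\<close>] by blast
qed

lemma cochain1_on_uniformly_invariant:
  assumes pg: "profinite_group G T" and S: "closedin T S" and d: "cochain1_on T S d"
  shows "\<exists>W. W \<lhd> G \<and> openin T W \<and> left_invariant_on G S W d"
proof -
  have "continuous_map (prod_topology (subtopology T S) (subtopology T S)) (discrete_topology UNIV)
      (d \<circ> fst)"
    using continuous_map_fst d unfolding cochain1_on_def by (rule continuous_map_compose)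
  then obtain W where W: "W \<lhd> G" "openin T W" "left_invariant2_on G S W (d \<circ> fst)"
    using cochain2_on_uniformly_invariant[OF pg S] unfolding cochain2_on_def by blast
  have "d (w \<otimes> s) = d s" if "s \<in> S" "w \<in> W" "w \<otimes> s \<in> S" for s w
  proof -
    have "s \<in> carrier G"
      using closedin_subset[OF S] that(1) pg
      unfolding profinite_group_def topological_group_def by auto
    moreover have "\<one> \<in> W" using normal_imp_subgroup[OF W(1)] by (rule subgroup.one_closed)
    ultimately show ?thesis
      using W(3) that unfolding left_invariant2_on_def
      by (metis (no_types, lifting) comp_apply fst_conv l_one)
  qed
  then show ?thesis using W(1,2) unfolding left_invariant_on_def by blast
qed

end


definition cocycle_on :: "('a,'b) monoid_scheme \<Rightarrow> 'a set \<Rightarrow> ('a \<times> 'a \<Rightarrow> 'c::ab_group_add) \<Rightarrow> bool"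
  where "cocycle_on G S f \<longleftrightarrow> (\<forall>g\<in>S. \<forall>h\<in>S. \<forall>k\<in>S.
    f (h, k) - f (g \<otimes>\<^bsub>G\<^esub> h, k) + f (g, h \<otimes>\<^bsub>G\<^esub> k) - f (g, h) = 0)"

definition coboundary_on ::
    "('a,'b) monoid_scheme \<Rightarrow> 'a topology \<Rightarrow> 'a set \<Rightarrow> ('a \<times> 'a \<Rightarrow> 'c::ab_group_add) \<Rightarrow> bool"
  where "coboundary_on G T S f \<longleftrightarrow>
    (\<exists>\<phi>. cochain1_on T S \<phi> \<and> (\<forall>g\<in>S. \<forall>h\<in>S. f (g, h) = \<phi> h - \<phi> (g \<otimes>\<^bsub>G\<^esub> h) + \<phi> g))"

lemma cochain1_on_subset: "cochain1_on T S d \<Longrightarrow> A \<subseteq> S \<Longrightarrow> cochain1_on T A d"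
  unfolding cochain1_on_def by (rule continuous_map_from_subtopology_mono)

lemma coboundary_on_subset:
  assumes "coboundary_on G T S f" "A \<subseteq> S"
  shows "coboundary_on G T A f"
  using assms cochain1_on_subset unfolding coboundary_on_def by (meson subsetD)

lemma openin_subtopology_if_subset: "openin X U \<Longrightarrow> U \<subseteq> S \<Longrightarrow> openin (subtopology X S) U"
  unfolding openin_subtopology by (intro exI[of _ U]) auto

text \<open>Right_factor G W S x picks s \<in> S with x \<in> W s; cochains on S that are invariant under
  left multiplication by W extend through it to W <#> S.\<close>
definition right_factor :: "('a,'b) monoid_scheme \<Rightarrow> 'a set \<Rightarrow> 'a set \<Rightarrow> 'a \<Rightarrow> 'a" where
  "right_factor G W S x = (SOME s. s \<in> S \<and> (\<exists>w\<in>W. x = w \<otimes>\<^bsub>G\<^esub> s))"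

definition extend1 :: "('a,'b) monoid_scheme \<Rightarrow> 'a set \<Rightarrow> 'a set \<Rightarrow> ('a \<Rightarrow> 'c) \<Rightarrow> 'a \<Rightarrow> 'c" where
  "extend1 G W S d x = d (right_factor G W S x)"

definition extend2 ::
    "('a,'b) monoid_scheme \<Rightarrow> 'a set \<Rightarrow> 'a set \<Rightarrow> ('a \<times> 'a \<Rightarrow> 'c) \<Rightarrow> 'a \<times> 'a \<Rightarrow> 'c" where
  "extend2 G W S f z = f (right_factor G W S (fst z), right_factor G W S (snd z))"

context group
begin

lemma set_mult_memE:
  assumes "x \<in> W <#> S"
  obtains w s where "w \<in> W" "s \<in> S" "x = w \<otimes> s"
  using assms unfolding set_mult_def
proof (elim UN_E singletonE)
  fix w s assume "w \<in> W" "s \<in> S" "x = w \<otimes> s"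
  then show thesis by (rule that)
qed

lemma set_mult_memI:
  assumes "w \<in> W" "s \<in> S"
  shows "w \<otimes> s \<in> W <#> S"
  unfolding set_mult_def using assms by blast

lemma right_factor:
  assumes W: "subgroup W G" and S: "S \<subseteq> carrier G" and s: "s \<in> S" and w: "w \<in> W"
  obtains v where "right_factor G W S (w \<otimes> s) \<in> S" "v \<in> W"
    "s = v \<otimes> right_factor G W S (w \<otimes> s)"
proof -
  define r where "r = right_factor G W S (w \<otimes> s)"
  have "r \<in> S \<and> (\<exists>w'\<in>W. w \<otimes> s = w' \<otimes> r)"
    unfolding r_def right_factor_def by (rule someI[of _ s]) (intro conjI bexI[of _ w] refl s w)
  then obtain w' where r: "r \<in> S" "w' \<in> W" "w \<otimes> s = w' \<otimes> r" by blast
  have carrier: "w \<in> carrier G" "w' \<in> carrier G" "s \<in> carrier G" "r \<in> carrier G"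
    using subgroup.mem_carrier[OF W] w r(2) S s r(1) by auto
  have "s = inv w \<otimes> (w \<otimes> s)" using carrier by (simp add: inv_m_cancel_left)
  also have "\<dots> = (inv w \<otimes> w') \<otimes> r" using r(3) carrier by (simp add: m_assoc)
  finally show thesis
    using that[OF r(1)[unfolded r_def] subgroup.m_closed[OF W subgroup.m_inv_closed[OF W w] r(2)]]
    unfolding r_def by blast
qed

lemma extend1_eq:
  assumes W: "subgroup W G" and S: "S \<subseteq> carrier G" and d: "left_invariant_on G S W d"
    and s: "s \<in> S" and w: "w \<in> W"
  shows "extend1 G W S d (w \<otimes> s) = d s"
proof -
  obtain v where v: "right_factor G W S (w \<otimes> s) \<in> S" "v \<in> W"
      "s = v \<otimes> right_factor G W S (w \<otimes> s)"
    using right_factor[OF W S s w] by blast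
  then show ?thesis
    using d s unfolding left_invariant_on_def extend1_def by metis
qed

lemma extend1_eq_self:
  assumes "subgroup W G" "S \<subseteq> carrier G" "left_invariant_on G S W d" and s: "s \<in> S"
  shows "extend1 G W S d s = d s"
  using extend1_eq[OF assms subgroup.one_closed[OF assms(1)]] s assms(2) by auto

lemma extend2_eq:
  assumes W: "subgroup W G" and S: "S \<subseteq> carrier G" and f: "left_invariant2_on G S W f"
    and ab: "a \<in> S" "b \<in> S" and vw: "v \<in> W" "w \<in> W"
  shows "extend2 G W S f (v \<otimes> a, w \<otimes> b) = f (a, b)"
proof -
  obtain v' where v': "right_factor G W S (v \<otimes> a) \<in> S" "v' \<in> W"
      "a = v' \<otimes> right_factor G W S (v \<otimes> a)"
    using right_factor[OF W S ab(1) vw(1)] by blast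
  obtain w' where w': "right_factor G W S (w \<otimes> b) \<in> S" "w' \<in> W"
      "b = w' \<otimes> right_factor G W S (w \<otimes> b)"
    using right_factor[OF W S ab(2) vw(2)] by blast
  show ?thesis
    using f v' w' ab unfolding left_invariant2_on_def extend2_def by (metis fst_conv snd_conv)
qed

lemma extend2_eq_self:
  assumes "subgroup W G" "S \<subseteq> carrier G" "left_invariant2_on G S W f" and ab: "a \<in> S" "b \<in> S"
  shows "extend2 G W S f (a, b) = f (a, b)"
proof -
  have "a \<in> carrier G" "b \<in> carrier G" using ab assms(2) by auto
  then show ?thesis
    using extend2_eq[OF assms subgroup.one_closed[OF assms(1)] subgroup.one_closed[OF assms(1)]]
    by simp
qed

lemma normal_mult_factor:
  assumes W: "W \<lhd> G" and ab: "a \<in> carrier G" "b \<in> carrier G" and vw: "v \<in> W" "w \<in> W"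
  obtains u where "u \<in> W" "(v \<otimes> a) \<otimes> (w \<otimes> b) = u \<otimes> (a \<otimes> b)"
proof -
  interpret W: normal W G by (rule W)
  have "a \<otimes> w \<otimes> inv a \<in> W" using W.inv_op_closed2[OF ab(1) vw(2)] .
  moreover have "(v \<otimes> a) \<otimes> (w \<otimes> b) = (v \<otimes> (a \<otimes> w \<otimes> inv a)) \<otimes> (a \<otimes> b)"
    using ab vw W.subset by (auto simp: m_assoc inv_m_cancel_left)
  ultimately show thesis using that W.m_closed[OF vw(1)] by blast
qed

lemma subset_set_mult_normal: "W \<lhd> G \<Longrightarrow> S \<subseteq> carrier G \<Longrightarrow> S \<subseteq> W <#> S"
  using set_mult_memI[of \<one> W] normal_imp_subgroup[THEN subgroup.one_closed] by fastforce

lemma openin_set_mult: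
  assumes tg: "topological_group G T" and W: "openin T W" and S: "S \<subseteq> carrier G"
  shows "openin T (W <#> S)"
proof -
  have "W <#> S = (\<Union>s\<in>S. W #> s)"
    unfolding set_mult_def r_coset_def by (rule SUP_commute)
  also have "openin T \<dots>"
    using openin_r_coset[OF tg W] S by (intro openin_Union) auto
  finally show ?thesis .
qed

lemma hom_on_extend1:
  assumes S: "subgroup S G" and W: "W \<lhd> G"
    and d: "hom_on G S d" "left_invariant_on G S W d"
  shows "hom_on G (W <#> S) (extend1 G W S d)"
  unfolding hom_on_def
proof (intro ballI)
  have sW: "subgroup W G" using W by (rule normal_imp_subgroup)
  have Sc: "S \<subseteq> carrier G" using S by (rule subgroup.subset)
  fix x y assume "x \<in> W <#> S" "y \<in> W <#> S"
  then obtain v w a b where vwab: "v \<in> W" "w \<in> W" "a \<in> S" "b \<in> S" "x = v \<otimes> a" "y = w \<otimes> b"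
    by (metis set_mult_memE)
  obtain u where u: "u \<in> W" "x \<otimes> y = u \<otimes> (a \<otimes> b)"
    using normal_mult_factor[OF W] vwab Sc by (metis subsetD)
  have "extend1 G W S d (x \<otimes> y) = d (a \<otimes> b)"
    using u extend1_eq[OF sW Sc d(2) subgroup.m_closed[OF S vwab(3,4)]] by simp
  also have "\<dots> = d a + d b" using hom_onD[OF d(1) vwab(3,4)] .
  also have "\<dots> = extend1 G W S d x + extend1 G W S d y"
    using extend1_eq[OF sW Sc d(2)] vwab by simp
  finally show "extend1 G W S d (x \<otimes> y) = extend1 G W S d x + extend1 G W S d y" .
qed

lemma cochain1_on_if_left_invariant_on:
  assumes tg: "topological_group G T" and W: "subgroup W G" "openin T W"
    and A: "A \<subseteq> carrier G" "\<And>w x. w \<in> W \<Longrightarrow> x \<in> A \<Longrightarrow> w \<otimes> x \<in> A"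
    and d: "left_invariant_on G A W d"
  shows "cochain1_on T A d"
  unfolding cochain1_on_def continuous_map_discrete_iff_locally_constant
proof
  fix x assume "x \<in> topspace (subtopology T A)"
  then have x: "x \<in> A" "x \<in> carrier G" using A(1) by auto
  have "W #> x \<subseteq> A" unfolding r_coset_def using A(2) x(1) by auto
  then have "openin (subtopology T A) (W #> x)"
    using openin_r_coset[OF tg W(2) x(2)] by (intro openin_subtopology_if_subset)
  moreover have "x \<in> W #> x" using rcos_self[OF x(2) W(1)] .
  moreover have "\<forall>y\<in>W #> x. d y = d x"
    unfolding r_coset_def using d x(1) A(2) unfolding left_invariant_on_def by auto
  ultimately show "\<exists>U. openin (subtopology T A) U \<and> x \<in> U \<and> (\<forall>y\<in>U. d y = d x)" by blast
qed

lemma cochain2_on_if_left_invariant2_on: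
  assumes tg: "topological_group G T" and W: "subgroup W G" "openin T W"
    and A: "A \<subseteq> carrier G" "\<And>w x. w \<in> W \<Longrightarrow> x \<in> A \<Longrightarrow> w \<otimes> x \<in> A"
    and f: "left_invariant2_on G A W f"
  shows "cochain2_on T A f"
  unfolding cochain2_on_def continuous_map_discrete_iff_locally_constant
proof
  fix z assume "z \<in> topspace (prod_topology (subtopology T A) (subtopology T A))"
  then obtain x y where z: "z = (x, y)" "x \<in> A" "y \<in> A" "x \<in> carrier G" "y \<in> carrier G"
    using A(1) by auto
  have "W #> x \<subseteq> A" "W #> y \<subseteq> A" unfolding r_coset_def using A(2) z(2,3) by auto
  then have "openin (prod_topology (subtopology T A) (subtopology T A)) ((W #> x) \<times> (W #> y))"
    using openin_r_coset[OF tg W(2) z(4)] openin_r_coset[OF tg W(2) z(5)]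
    by (simp add: openin_prod_Times_iff openin_subtopology_if_subset)
  moreover have "z \<in> (W #> x) \<times> (W #> y)"
    using rcos_self[OF z(4) W(1)] rcos_self[OF z(5) W(1)] z(1) by simp
  moreover have "\<forall>z'\<in>(W #> x) \<times> (W #> y). f z' = f z"
    unfolding r_coset_def using f z(1-3) A(2) unfolding left_invariant2_on_def by auto
  ultimately show "\<exists>U. openin (prod_topology (subtopology T A) (subtopology T A)) U \<and> z \<in> U \<and>
      (\<forall>z'\<in>U. f z' = f z)" by blast
qed

lemma set_mult_left_closed:
  assumes W: "subgroup W G" and S: "S \<subseteq> carrier G" and w: "w \<in> W" and x: "x \<in> W <#> S"
  shows "w \<otimes> x \<in> W <#> S"
proof -
  obtain v s where "v \<in> W" "s \<in> S" "x = v \<otimes> s" using x by (rule set_mult_memE)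
  moreover have "w \<otimes> (v \<otimes> s) = (w \<otimes> v) \<otimes> s"
    using subgroup.mem_carrier[OF W] w \<open>v \<in> W\<close> \<open>s \<in> S\<close> S by (auto simp: m_assoc)
  ultimately show ?thesis using set_mult_memI subgroup.m_closed[OF W w] by metis
qed

lemma cochain1_on_extend1:
  assumes tg: "topological_group G T" and W: "subgroup W G" "openin T W"
    and S: "S \<subseteq> carrier G" and d: "left_invariant_on G S W d"
  shows "cochain1_on T (W <#> S) (extend1 G W S d)"
proof (rule cochain1_on_if_left_invariant_on[OF tg W])
  show "W <#> S \<subseteq> carrier G" using setmult_subset_G[OF subgroup.subset[OF W(1)] S] .
  show "w \<otimes> x \<in> W <#> S" if "w \<in> W" "x \<in> W <#> S" for w x
    using set_mult_left_closed[OF W(1) S that] .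
  show "left_invariant_on G (W <#> S) W (extend1 G W S d)"
    unfolding left_invariant_on_def
  proof (intro ballI impI)
    fix x w assume x: "x \<in> W <#> S" and w: "w \<in> W"
    obtain v s where vs: "v \<in> W" "s \<in> S" "x = v \<otimes> s" using x by (rule set_mult_memE)
    have "w \<otimes> x = (w \<otimes> v) \<otimes> s"
      using subgroup.mem_carrier[OF W(1)] w vs S by (auto simp: m_assoc)
    then show "extend1 G W S d (w \<otimes> x) = extend1 G W S d x"
      using extend1_eq[OF W(1) S d vs(2)] subgroup.m_closed[OF W(1) w vs(1)] vs by simp
  qed
qed

lemma cochain2_on_extend2:
  assumes tg: "topological_group G T" and W: "subgroup W G" "openin T W"
    and S: "S \<subseteq> carrier G" and f: "left_invariant2_on G S W f"
  shows "cochain2_on T (W <#> S) (extend2 G W S f)"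
proof (rule cochain2_on_if_left_invariant2_on[OF tg W])
  show "W <#> S \<subseteq> carrier G" using setmult_subset_G[OF subgroup.subset[OF W(1)] S] .
  show "w \<otimes> x \<in> W <#> S" if "w \<in> W" "x \<in> W <#> S" for w x
    using set_mult_left_closed[OF W(1) S that] .
  show "left_invariant2_on G (W <#> S) W (extend2 G W S f)"
    unfolding left_invariant2_on_def
  proof (intro ballI impI)
    fix x y w w' assume x: "x \<in> W <#> S" and y: "y \<in> W <#> S" and w: "w \<in> W" "w' \<in> W"
    obtain v a where va: "v \<in> W" "a \<in> S" "x = v \<otimes> a" using x by (rule set_mult_memE)
    obtain v' b where vb: "v' \<in> W" "b \<in> S" "y = v' \<otimes> b" using y by (rule set_mult_memE)
    have "w \<otimes> x = (w \<otimes> v) \<otimes> a" "w' \<otimes> y = (w' \<otimes> v') \<otimes> b"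
      using subgroup.mem_carrier[OF W(1)] w va vb S by (auto simp: m_assoc)
    then show "extend2 G W S f (w \<otimes> x, w' \<otimes> y) = extend2 G W S f (x, y)"
      using extend2_eq[OF W(1) S f va(2) vb(2)] subgroup.m_closed[OF W(1)] w va vb by simp
  qed
qed

lemma ker_on_extend1:
  assumes W: "subgroup W G" and S: "S \<subseteq> carrier G" and d: "left_invariant_on G S W d"
  shows "ker_on (W <#> S) (extend1 G W S d) = W <#> ker_on S d"
proof (intro equalityI subsetI)
  fix x assume "x \<in> ker_on (W <#> S) (extend1 G W S d)"
  then obtain w s where "w \<in> W" "s \<in> S" "x = w \<otimes> s" "extend1 G W S d x = 0"
    unfolding ker_on_def by (auto elim: set_mult_memE)
  then show "x \<in> W <#> ker_on S d"
    using extend1_eq[OF W S d] unfolding ker_on_def by (auto intro: set_mult_memI)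
next
  fix x assume "x \<in> W <#> ker_on S d"
  then obtain w s where "w \<in> W" "s \<in> S" "d s = 0" "x = w \<otimes> s"
    unfolding ker_on_def by (auto elim: set_mult_memE)
  then show "x \<in> ker_on (W <#> S) (extend1 G W S d)"
    using extend1_eq[OF W S d] unfolding ker_on_def by (auto intro: set_mult_memI)
qed

lemma image_extend1:
  assumes W: "subgroup W G" and S: "S \<subseteq> carrier G" and d: "left_invariant_on G S W d"
  shows "extend1 G W S d ` (W <#> S) = d ` S"
proof (intro equalityI subsetI)
  fix c assume "c \<in> extend1 G W S d ` (W <#> S)"
  then obtain w s where "w \<in> W" "s \<in> S" "c = extend1 G W S d (w \<otimes> s)"
    by (auto elim: set_mult_memE)
  then show "c \<in> d ` S" using extend1_eq[OF W S d] by simp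
next
  fix c assume "c \<in> d ` S"
  then obtain s where "s \<in> S" "c = d s" by blast
  then show "c \<in> extend1 G W S d ` (W <#> S)"
    using extend1_eq[OF W S d _ subgroup.one_closed[OF W]] set_mult_memI[OF subgroup.one_closed[OF W]]
      S by (metis image_eqI l_one subsetD)
qed

lemma cocycle_on_extend2:
  assumes S: "subgroup S G" and W: "W \<lhd> G"
    and f: "cocycle_on G S f" "left_invariant2_on G S W f"
  shows "cocycle_on G (W <#> S) (extend2 G W S f)"
  unfolding cocycle_on_def
proof (intro ballI)
  have sW: "subgroup W G" using W by (rule normal_imp_subgroup)
  have Sc: "S \<subseteq> carrier G" using S by (rule subgroup.subset)
  note ext = extend2_eq[OF sW Sc f(2)]
  fix x y z assume "x \<in> W <#> S" "y \<in> W <#> S" "z \<in> W <#> S"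
  then obtain v1 v2 v3 a b c where vabc: "v1 \<in> W" "v2 \<in> W" "v3 \<in> W" "a \<in> S" "b \<in> S" "c \<in> S"
      "x = v1 \<otimes> a" "y = v2 \<otimes> b" "z = v3 \<otimes> c"
    by (metis set_mult_memE)
  obtain u where u: "u \<in> W" "x \<otimes> y = u \<otimes> (a \<otimes> b)"
    using normal_mult_factor[OF W] vabc Sc by (metis subsetD)
  obtain u' where u': "u' \<in> W" "y \<otimes> z = u' \<otimes> (b \<otimes> c)"
    using normal_mult_factor[OF W] vabc Sc by (metis subsetD)
  have ab: "a \<otimes> b \<in> S" and bc: "b \<otimes> c \<in> S" using vabc S by (auto intro: subgroup.m_closed)
  have "extend2 G W S f (y, z) = f (b, c)" "extend2 G W S f (x, y) = f (a, b)"
    "extend2 G W S f (x \<otimes> y, z) = f (a \<otimes> b, c)" "extend2 G W S f (x, y \<otimes> z) = f (a, b \<otimes> c)"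
    using ext vabc u u' ab bc by simp_all
  then show "extend2 G W S f (y, z) - extend2 G W S f (x \<otimes> y, z) + extend2 G W S f (x, y \<otimes> z)
      - extend2 G W S f (x, y) = 0"
    using f(1) vabc(4-6) unfolding cocycle_on_def by simp
qed

lemma coboundary_on_extend2:
  assumes tg: "topological_group G T" and S: "subgroup S G" and W: "W \<lhd> G" "openin T W"
    and N: "subgroup N G" "N \<subseteq> S" and f: "left_invariant2_on G S W f"
    and \<theta>: "cochain1_on T N \<theta>" "left_invariant_on G N W \<theta>"
    and f_\<theta>: "\<forall>g\<in>N. \<forall>h\<in>N. f (g, h) = \<theta> h - \<theta> (g \<otimes> h) + \<theta> g"
  shows "coboundary_on G T (W <#> N) (extend2 G W S f)"
  unfolding coboundary_on_def
proof (intro exI conjI ballI)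
  have sW: "subgroup W G" using W(1) by (rule normal_imp_subgroup)
  have Sc: "S \<subseteq> carrier G" and Nc: "N \<subseteq> carrier G" using S N by (auto dest: subgroup.subset)
  show "cochain1_on T (W <#> N) (extend1 G W N \<theta>)"
    using tg sW W(2) Nc \<theta>(2) by (rule cochain1_on_extend1)
  note ext1 = extend1_eq[OF sW Nc \<theta>(2)] and ext2 = extend2_eq[OF sW Sc f]
  fix x y assume "x \<in> W <#> N" "y \<in> W <#> N"
  then obtain v w a b where vwab: "v \<in> W" "w \<in> W" "a \<in> N" "b \<in> N" "x = v \<otimes> a" "y = w \<otimes> b"
    by (metis set_mult_memE)
  obtain u where u: "u \<in> W" "x \<otimes> y = u \<otimes> (a \<otimes> b)"
    using normal_mult_factor[OF W(1)] vwab Nc by (metis subsetD)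
  have "a \<otimes> b \<in> N" using vwab N(1) by (auto intro: subgroup.m_closed)
  then show "extend2 G W S f (x, y) =
      extend1 G W N \<theta> y - extend1 G W N \<theta> (x \<otimes> y) + extend1 G W N \<theta> x"
    using ext1 ext2 vwab u N(2) f_\<theta> by (auto simp: subsetD)
qed

end


definition cup_kills_cor :: "('a,'b) monoid_scheme \<Rightarrow> 'a topology \<Rightarrow> 'a set \<Rightarrow>
    ('a \<Rightarrow> 'p::prime_card mod_ring) \<Rightarrow> bool" where
  "cup_kills_cor G T S \<kappa> \<longleftrightarrow> (\<forall>\<phi>. cochain1_on T (ker_on S \<kappa>) \<phi> \<and> hom_on G (ker_on S \<kappa>) \<phi> \<longrightarrow>
    coboundary_on G T S (cup11 \<kappa> (cor1 (G\<lparr>carrier := S\<rparr>) (ker_on S \<kappa>) \<phi>)))"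

definition cup_kernel_in_cor_image :: "('a,'b) monoid_scheme \<Rightarrow> 'a topology \<Rightarrow> 'a set \<Rightarrow>
    ('a \<Rightarrow> 'p::prime_card mod_ring) \<Rightarrow> bool" where
  "cup_kernel_in_cor_image G T S \<kappa> \<longleftrightarrow> (\<forall>\<psi>. cochain1_on T S \<psi> \<and> hom_on G S \<psi> \<longrightarrow>
    coboundary_on G T S (cup11 \<kappa> \<psi>) \<longrightarrow>
    (\<exists>\<phi>. cochain1_on T (ker_on S \<kappa>) \<phi> \<and> hom_on G (ker_on S \<kappa>) \<phi> \<and>
      (\<forall>g\<in>S. \<psi> g = cor1 (G\<lparr>carrier := S\<rparr>) (ker_on S \<kappa>) \<phi> g)))"

definition res_kernel_in_cup_image :: "('a,'b) monoid_scheme \<Rightarrow> 'a topology \<Rightarrow> 'a set \<Rightarrow>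
    ('a \<Rightarrow> 'p::prime_card mod_ring) \<Rightarrow> bool" where
  "res_kernel_in_cup_image G T S \<kappa> \<longleftrightarrow> (\<forall>f. cochain2_on T S f \<and> cocycle_on G S f \<longrightarrow>
    coboundary_on G T (ker_on S \<kappa>) f \<longrightarrow>
    (\<exists>\<psi>. cochain1_on T S \<psi> \<and> hom_on G S \<psi> \<and> coboundary_on G T S (\<lambda>x. f x - cup11 \<kappa> \<psi> x)))"

text \<open>The remaining condition of cup_exact, im (\<kappa>\<union>) \<subseteq> ker Res, always holds: \<kappa> \<union> \<psi> vanishes
  identically on ker \<kappa> \<times> ker \<kappa>.\<close>
lemma cup_exact_subgroup_iff:
  "cup_exact (G\<lparr>carrier := S\<rparr>) (subtopology T S) TYPE('p::prime_card) \<longleftrightarrow>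
    (\<forall>\<kappa> :: 'a \<Rightarrow> 'p mod_ring. cochain1_on T S \<kappa> \<and> hom_on G S \<kappa> \<longrightarrow>
      cup_kills_cor G T S \<kappa> \<and> cup_kernel_in_cor_image G T S \<kappa> \<and> res_kernel_in_cup_image G T S \<kappa>)"
proof -
  have ker: "kerF (G\<lparr>carrier := S\<rparr>) \<kappa> = ker_on S \<kappa>" for \<kappa> :: "'a \<Rightarrow> 'p mod_ring"
    unfolding kerF_def ker_on_def by simp
  have sub: "subtopology (subtopology T S) (ker_on S \<kappa>) = subtopology T (ker_on S \<kappa>)"
    for \<kappa> :: "'a \<Rightarrow> 'p mod_ring"
    using ker_on_subset[of S \<kappa>] by (simp add: subtopology_subtopology Int_absorb1)
  have H1: "H1 (G\<lparr>carrier := A\<rparr>) (subtopology T A) = {d. cochain1_on T A d \<and> hom_on G A d}" for A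
    unfolding H1_def cochain1_def cochain1_on_def hom_on_def by simp
  have B2: "B2 (G\<lparr>carrier := A\<rparr>) (subtopology T A) = {f. coboundary_on G T A f}" for A
    unfolding B2_def coboundary_on_def cochain1_def cochain1_on_def by simp
  have Z2: "Z2 (G\<lparr>carrier := A\<rparr>) (subtopology T A) = {f. cochain2_on T A f \<and> cocycle_on G A f}"
    for A
    unfolding Z2_def cocycle_on_def cochain2_def cochain2_on_def by simp
  have res_cup: "coboundary_on G T (ker_on S \<kappa>) (cup11 \<kappa> \<psi>)" for \<kappa> \<psi> :: "'a \<Rightarrow> 'p mod_ring"
    unfolding coboundary_on_def cochain1_on_def cup11_def ker_on_def
    by (intro exI[of _ "\<lambda>_. 0"]) simp
  show ?thesis
    unfolding cup_exact_def Let_def ker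
    using H1[of S] B2[of S] Z2[of S] H1[of "ker_on S _"] B2[of "ker_on S _"]
    by (simp add: sub H1 B2 Z2 res_cup cohomologous2_def cup_kills_cor_def
        cup_kernel_in_cor_image_def res_kernel_in_cup_image_def)
qed

lemma coboundary_on_cong:
  assumes "coboundary_on G T S f" "\<And>g h. g \<in> S \<Longrightarrow> h \<in> S \<Longrightarrow> f (g, h) = f' (g, h)"
  shows "coboundary_on G T S f'"
  using assms unfolding coboundary_on_def by metis

lemma cup11_extend1: "cup11 (extend1 G W S \<kappa>) (extend1 G W S \<psi>) = extend2 G W S (cup11 \<kappa> \<psi>)"
  unfolding cup11_def extend1_def extend2_def by auto

lemma left_invariant2_on_cup11:
  "left_invariant_on G S W \<kappa> \<Longrightarrow> left_invariant_on G S W \<psi> \<Longrightarrow>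
    left_invariant2_on G S W (cup11 \<kappa> \<psi>)"
  unfolding left_invariant_on_def left_invariant2_on_def cup11_def by simp

context group
begin

lemma closedin_ker_on:
  assumes H: "closedin T H" and \<kappa>: "cochain1_on T H \<kappa>"
  shows "closedin T (ker_on H \<kappa>)"
proof -
  have "closedin (subtopology T H) {x \<in> topspace (subtopology T H). \<kappa> x \<in> {0}}"
    using \<kappa> unfolding cochain1_on_def by (rule closedin_continuous_map_preimage) simp
  moreover have "{x \<in> topspace (subtopology T H). \<kappa> x \<in> {0}} = ker_on H \<kappa>"
    using closedin_subset[OF H] unfolding ker_on_def by auto
  ultimately show ?thesis using H by (metis closedin_trans_full)
qed

lemma open_normal_subgroup_Int:
  "W1 \<lhd> G \<Longrightarrow> openin T W1 \<Longrightarrow> W2 \<lhd> G \<Longrightarrow> openin T W2 \<Longrightarrow> W1 \<inter> W2 \<lhd> G \<and> openin T (W1 \<inter> W2)"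
  using normal_subgroup_intersect by blast

lemma extend1_hom_on_ker:
  fixes \<kappa> :: "'a \<Rightarrow> 'c::ab_group_add"
  assumes tg: "topological_group G T" and H: "subgroup H G" and W: "W \<lhd> G" "openin T W"
    and \<kappa>: "hom_on G H \<kappa>" "left_invariant_on G H W \<kappa>"
  defines "U \<equiv> W <#> H" and "\<kappa>U \<equiv> extend1 G W H \<kappa>"
  shows "subgroup U G" "openin T U" "H \<subseteq> U" "cochain1_on T U \<kappa>U" "hom_on G U \<kappa>U"
    "\<And>h. h \<in> H \<Longrightarrow> \<kappa>U h = \<kappa> h" "\<kappa>U ` U = \<kappa> ` H" "ker_on U \<kappa>U = W <#> ker_on H \<kappa>"
proof -
  have sW: "subgroup W G" using W(1) by (rule normal_imp_subgroup)
  have Hc: "H \<subseteq> carrier G" using H by (rule subgroup.subset)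
  show "subgroup U G" unfolding U_def using W(1) H by (rule mult_norm_subgroup)
  show "openin T U" unfolding U_def using tg W(2) Hc by (rule openin_set_mult)
  show "H \<subseteq> U" unfolding U_def using W(1) Hc by (rule subset_set_mult_normal)
  show "cochain1_on T U \<kappa>U" unfolding U_def \<kappa>U_def using tg sW W(2) Hc \<kappa>(2)
    by (rule cochain1_on_extend1)
  show "hom_on G U \<kappa>U" unfolding U_def \<kappa>U_def using H W(1) \<kappa> by (rule hom_on_extend1)
  show "\<kappa>U h = \<kappa> h" if "h \<in> H" for h unfolding \<kappa>U_def using sW Hc \<kappa>(2) that
    by (rule extend1_eq_self)
  show "\<kappa>U ` U = \<kappa> ` H" unfolding U_def \<kappa>U_def using sW Hc \<kappa>(2) by (rule image_extend1)
  show "ker_on U \<kappa>U = W <#> ker_on H \<kappa>" unfolding U_def \<kappa>U_def using sW Hc \<kappa>(2)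
    by (rule ker_on_extend1)
qed

end

context group
begin

lemma cup_kills_cor_closed:
  fixes \<kappa> :: "'a \<Rightarrow> 'p::prime_card mod_ring"
  assumes pg: "profinite_group G T" and H: "subgroup H G" "closedin T H"
    and \<kappa>: "cochain1_on T H \<kappa>" "hom_on G H \<kappa>"
    and open_case: "\<And>U (\<kappa>U :: 'a \<Rightarrow> 'p mod_ring). subgroup U G \<Longrightarrow> openin T U \<Longrightarrow>
      cochain1_on T U \<kappa>U \<Longrightarrow> hom_on G U \<kappa>U \<Longrightarrow> cup_kills_cor G T U \<kappa>U"
  shows "cup_kills_cor G T H \<kappa>"
  unfolding cup_kills_cor_def
proof (intro allI impI)
  let ?N = "ker_on H \<kappa>"
  fix \<phi> :: "'a \<Rightarrow> 'p mod_ring" assume \<phi>: "cochain1_on T ?N \<phi> \<and> hom_on G ?N \<phi>"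
  have tg: "topological_group G T" using pg unfolding profinite_group_def by blast
  have N: "subgroup ?N G" using H(1) \<kappa>(2) by (rule subgroup_ker_on)
  obtain W1 where W1: "W1 \<lhd> G" "openin T W1" "left_invariant_on G H W1 \<kappa>"
    using cochain1_on_uniformly_invariant[OF pg H(2) \<kappa>(1)] by blast
  obtain W2 where W2: "W2 \<lhd> G" "openin T W2" "left_invariant_on G ?N W2 \<phi>"
    using cochain1_on_uniformly_invariant[OF pg closedin_ker_on[OF H(2) \<kappa>(1)]] \<phi> by blast
  define W where "W = W1 \<inter> W2"
  have W: "W \<lhd> G" "openin T W"
    using open_normal_subgroup_Int[OF W1(1,2) W2(1,2)] unfolding W_def by blast+
  have sW: "subgroup W G" using W(1) by (rule normal_imp_subgroup)
  have inv: "left_invariant_on G H W \<kappa>" "left_invariant_on G ?N W \<phi>"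
    using left_invariant_on_mono[OF W1(3), of W] left_invariant_on_mono[OF W2(3), of W]
    unfolding W_def by auto
  define U where "U = W <#> H"
  define \<kappa>U :: "'a \<Rightarrow> 'p mod_ring" where "\<kappa>U = extend1 G W H \<kappa>"
  define \<phi>U :: "'a \<Rightarrow> 'p mod_ring" where "\<phi>U = extend1 G W ?N \<phi>"
  note U = extend1_hom_on_ker[OF tg H(1) W \<kappa>(2) inv(1), folded U_def \<kappa>U_def]
  note \<phi>U = extend1_hom_on_ker[OF tg N W conjunct2[OF \<phi>] inv(2), folded \<phi>U_def]
  have "coboundary_on G T U (cup11 \<kappa>U (cor1 (G\<lparr>carrier := U\<rparr>) (ker_on U \<kappa>U) \<phi>U))"
    using open_case[OF U(1,2,4,5)] \<phi>U(4,5) unfolding cup_kills_cor_def U(8) by blast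
  then have "coboundary_on G T H (cup11 \<kappa>U (cor1 (G\<lparr>carrier := U\<rparr>) (ker_on U \<kappa>U) \<phi>U))"
    using U(3) by (rule coboundary_on_subset)
  then show "coboundary_on G T H (cup11 \<kappa> (cor1 (G\<lparr>carrier := H\<rparr>) ?N \<phi>))"
  proof (rule coboundary_on_cong)
    fix g h assume gh: "g \<in> H" "h \<in> H"
    have "cor1 (G\<lparr>carrier := U\<rparr>) (ker_on U \<kappa>U) \<phi>U h = cor1 (G\<lparr>carrier := H\<rparr>) ?N \<phi> h"
      using cor1_ker_on_extend[OF H(1) U(1,3) \<kappa>(2) U(5,6) equalityD1[OF U(7)]
          conjunct2[OF \<phi>] _ \<phi>U(6) gh(2)] \<phi>U(5) U(8) by simp
    then show "cup11 \<kappa>U (cor1 (G\<lparr>carrier := U\<rparr>) (ker_on U \<kappa>U) \<phi>U) (g, h) =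
        cup11 \<kappa> (cor1 (G\<lparr>carrier := H\<rparr>) ?N \<phi>) (g, h)"
      unfolding cup11_def using U(6)[OF gh(1)] by simp
  qed
qed

lemma cup_kernel_in_cor_image_closed:
  fixes \<kappa> :: "'a \<Rightarrow> 'p::prime_card mod_ring"
  assumes pg: "profinite_group G T" and H: "subgroup H G" "closedin T H"
    and \<kappa>: "cochain1_on T H \<kappa>" "hom_on G H \<kappa>"
    and open_case: "\<And>U (\<kappa>U :: 'a \<Rightarrow> 'p mod_ring). subgroup U G \<Longrightarrow> openin T U \<Longrightarrow>
      cochain1_on T U \<kappa>U \<Longrightarrow> hom_on G U \<kappa>U \<Longrightarrow> cup_kernel_in_cor_image G T U \<kappa>U"
  shows "cup_kernel_in_cor_image G T H \<kappa>"
  unfolding cup_kernel_in_cor_image_def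
proof (intro allI impI)
  fix \<psi> :: "'a \<Rightarrow> 'p mod_ring" assume \<psi>: "cochain1_on T H \<psi> \<and> hom_on G H \<psi>"
    and "coboundary_on G T H (cup11 \<kappa> \<psi>)"
  then obtain \<beta> where \<beta>: "cochain1_on T H \<beta>"
      "\<forall>g\<in>H. \<forall>h\<in>H. cup11 \<kappa> \<psi> (g, h) = \<beta> h - \<beta> (g \<otimes> h) + \<beta> g"
    unfolding coboundary_on_def by blast
  have tg: "topological_group G T" using pg unfolding profinite_group_def by blast
  obtain W1 where W1: "W1 \<lhd> G" "openin T W1" "left_invariant_on G H W1 \<kappa>"
    using cochain1_on_uniformly_invariant[OF pg H(2) \<kappa>(1)] by blast
  obtain W2 where W2: "W2 \<lhd> G" "openin T W2" "left_invariant_on G H W2 \<psi>"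
    using cochain1_on_uniformly_invariant[OF pg H(2)] \<psi> by blast
  obtain W3 where W3: "W3 \<lhd> G" "openin T W3" "left_invariant_on G H W3 \<beta>"
    using cochain1_on_uniformly_invariant[OF pg H(2) \<beta>(1)] by blast
  define W where "W = W1 \<inter> W2 \<inter> W3"
  have W: "W \<lhd> G" "openin T W"
  proof -
    have "W1 \<inter> W2 \<lhd> G" "openin T (W1 \<inter> W2)"
      using open_normal_subgroup_Int[OF W1(1,2) W2(1,2)] by auto
    then show "W \<lhd> G" "openin T W"
      using open_normal_subgroup_Int[OF _ _ W3(1,2)] unfolding W_def by auto
  qed
  have inv: "left_invariant_on G H W \<kappa>" "left_invariant_on G H W \<psi>" "left_invariant_on G H W \<beta>"
    using left_invariant_on_mono[OF W1(3), of W] left_invariant_on_mono[OF W2(3), of W]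
      left_invariant_on_mono[OF W3(3), of W] unfolding W_def by auto
  define U where "U = W <#> H"
  define \<kappa>U :: "'a \<Rightarrow> 'p mod_ring" where "\<kappa>U = extend1 G W H \<kappa>"
  define \<psi>U :: "'a \<Rightarrow> 'p mod_ring" where "\<psi>U = extend1 G W H \<psi>"
  note U = extend1_hom_on_ker[OF tg H(1) W \<kappa>(2) inv(1), folded U_def \<kappa>U_def]
  note \<psi>U = extend1_hom_on_ker[OF tg H(1) W conjunct2[OF \<psi>] inv(2), folded U_def \<psi>U_def]
  have "coboundary_on G T U (cup11 \<kappa>U \<psi>U)"
    unfolding \<kappa>U_def \<psi>U_def cup11_extend1 U_def
    by (rule coboundary_on_extend2[OF tg H(1) W H(1) order_refl
          left_invariant2_on_cup11[OF inv(1,2)] \<beta>(1) inv(3) \<beta>(2)])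
  then obtain \<phi> where \<phi>: "cochain1_on T (ker_on U \<kappa>U) \<phi>" "hom_on G (ker_on U \<kappa>U) \<phi>"
      "\<forall>g\<in>U. \<psi>U g = cor1 (G\<lparr>carrier := U\<rparr>) (ker_on U \<kappa>U) \<phi> g"
    using open_case[OF U(1,2,4,5)] \<psi>U(4,5) unfolding cup_kernel_in_cor_image_def by blast
  have N: "ker_on H \<kappa> \<subseteq> ker_on U \<kappa>U"
    using U(3,6) unfolding ker_on_def by auto
  show "\<exists>\<phi>. cochain1_on T (ker_on H \<kappa>) \<phi> \<and> hom_on G (ker_on H \<kappa>) \<phi> \<and>
      (\<forall>g\<in>H. \<psi> g = cor1 (G\<lparr>carrier := H\<rparr>) (ker_on H \<kappa>) \<phi> g)"
  proof (intro exI conjI ballI)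
    show "cochain1_on T (ker_on H \<kappa>) \<phi>" using \<phi>(1) N by (rule cochain1_on_subset)
    show "hom_on G (ker_on H \<kappa>) \<phi>" using \<phi>(2) N by (rule hom_on_subset)
    fix g assume g: "g \<in> H"
    have "g \<in> U" using U(3) g ..
    then have "\<psi> g = cor1 (G\<lparr>carrier := U\<rparr>) (ker_on U \<kappa>U) \<phi> g"
      using \<phi>(3) \<psi>U(6)[OF g] by simp
    also have "\<dots> = cor1 (G\<lparr>carrier := H\<rparr>) (ker_on H \<kappa>) \<phi> g"
      using cor1_ker_on_extend[OF H(1) U(1,3) \<kappa>(2) U(5,6) equalityD1[OF U(7)]
          hom_on_subset[OF \<phi>(2) N] \<phi>(2) _ g] by simp
    finally show "\<psi> g = cor1 (G\<lparr>carrier := H\<rparr>) (ker_on H \<kappa>) \<phi> g" .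
  qed
qed

lemma res_kernel_in_cup_image_closed:
  fixes \<kappa> :: "'a \<Rightarrow> 'p::prime_card mod_ring"
  assumes pg: "profinite_group G T" and H: "subgroup H G" "closedin T H"
    and \<kappa>: "cochain1_on T H \<kappa>" "hom_on G H \<kappa>"
    and open_case: "\<And>U (\<kappa>U :: 'a \<Rightarrow> 'p mod_ring). subgroup U G \<Longrightarrow> openin T U \<Longrightarrow>
      cochain1_on T U \<kappa>U \<Longrightarrow> hom_on G U \<kappa>U \<Longrightarrow> res_kernel_in_cup_image G T U \<kappa>U"
  shows "res_kernel_in_cup_image G T H \<kappa>"
  unfolding res_kernel_in_cup_image_def
proof (intro allI impI)
  let ?N = "ker_on H \<kappa>"
  fix f :: "'a \<times> 'a \<Rightarrow> 'p mod_ring" assume f: "cochain2_on T H f \<and> cocycle_on G H f" and "coboundary_on G T ?N f"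
  then obtain \<theta> where \<theta>: "cochain1_on T ?N \<theta>" "\<forall>g\<in>?N. \<forall>h\<in>?N. f (g, h) = \<theta> h - \<theta> (g \<otimes> h) + \<theta> g"
    unfolding coboundary_on_def by blast
  have tg: "topological_group G T" using pg unfolding profinite_group_def by blast
  have N: "subgroup ?N G" using H(1) \<kappa>(2) by (rule subgroup_ker_on)
  obtain W1 where W1: "W1 \<lhd> G" "openin T W1" "left_invariant_on G H W1 \<kappa>"
    using cochain1_on_uniformly_invariant[OF pg H(2) \<kappa>(1)] by blast
  obtain W2 where W2: "W2 \<lhd> G" "openin T W2" "left_invariant2_on G H W2 f"
    using cochain2_on_uniformly_invariant[OF pg H(2)] f by blast
  obtain W3 where W3: "W3 \<lhd> G" "openin T W3" "left_invariant_on G ?N W3 \<theta>"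
    using cochain1_on_uniformly_invariant[OF pg closedin_ker_on[OF H(2) \<kappa>(1)] \<theta>(1)] by blast
  define W where "W = W1 \<inter> W2 \<inter> W3"
  have W: "W \<lhd> G" "openin T W"
  proof -
    have "W1 \<inter> W2 \<lhd> G" "openin T (W1 \<inter> W2)"
      using open_normal_subgroup_Int[OF W1(1,2) W2(1,2)] by auto
    then show "W \<lhd> G" "openin T W"
      using open_normal_subgroup_Int[OF _ _ W3(1,2)] unfolding W_def by auto
  qed
  have sW: "subgroup W G" using W(1) by (rule normal_imp_subgroup)
  have inv: "left_invariant_on G H W \<kappa>" "left_invariant2_on G H W f" "left_invariant_on G ?N W \<theta>"
    using left_invariant_on_mono[OF W1(3), of W] left_invariant2_on_mono[OF W2(3), of W]
      left_invariant_on_mono[OF W3(3), of W] unfolding W_def by auto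
  define U where "U = W <#> H"
  define \<kappa>U :: "'a \<Rightarrow> 'p mod_ring" where "\<kappa>U = extend1 G W H \<kappa>"
  define fU :: "'a \<times> 'a \<Rightarrow> 'p mod_ring" where "fU = extend2 G W H f"
  note U = extend1_hom_on_ker[OF tg H(1) W \<kappa>(2) inv(1), folded U_def \<kappa>U_def]
  have "cochain2_on T U fU"
    unfolding U_def fU_def using tg sW W(2) subgroup.subset[OF H(1)] inv(2) by (rule cochain2_on_extend2)
  moreover have "cocycle_on G U fU"
    unfolding U_def fU_def using H(1) W(1) conjunct2[OF f] inv(2) by (rule cocycle_on_extend2)
  moreover have "coboundary_on G T (ker_on U \<kappa>U) fU"
    unfolding U(8) fU_def
    by (rule coboundary_on_extend2[OF tg H(1) W N ker_on_subset inv(2) \<theta>(1) inv(3) \<theta>(2)])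
  ultimately obtain \<psi> where \<psi>: "cochain1_on T U \<psi>" "hom_on G U \<psi>"
      "coboundary_on G T U (\<lambda>x. fU x - cup11 \<kappa>U \<psi> x)"
    using open_case[OF U(1,2,4,5)] unfolding res_kernel_in_cup_image_def by blast
  show "\<exists>\<psi>. cochain1_on T H \<psi> \<and> hom_on G H \<psi> \<and> coboundary_on G T H (\<lambda>x. f x - cup11 \<kappa> \<psi> x)"
  proof (intro exI conjI)
    show "cochain1_on T H \<psi>" using \<psi>(1) U(3) by (rule cochain1_on_subset)
    show "hom_on G H \<psi>" using \<psi>(2) U(3) by (rule hom_on_subset)
    show "coboundary_on G T H (\<lambda>x. f x - cup11 \<kappa> \<psi> x)"
    proof (rule coboundary_on_cong[OF coboundary_on_subset[OF \<psi>(3) U(3)]])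
      fix g h assume "g \<in> H" "h \<in> H"
      then show "fU (g, h) - cup11 \<kappa>U \<psi> (g, h) = f (g, h) - cup11 \<kappa> \<psi> (g, h)"
        unfolding fU_def cup11_def
        using extend2_eq_self[OF sW subgroup.subset[OF H(1)] inv(2)] U(6) by simp
    qed
  qed
qed

end

theorem mainTheorem11:
  fixes \<Gamma> :: "('a,'b) monoid_scheme" and T :: "'a topology"
  assumes "profinite_group \<Gamma> T"
    and "\<forall>U. subgroup U \<Gamma> \<and> openin T U \<longrightarrow>
           cup_exact (subgrp \<Gamma> U) (subtopology T U) TYPE('p::prime_card)"
  shows "\<forall>H. subgroup H \<Gamma> \<and> closedin T H \<longrightarrow>
           cup_exact (subgrp \<Gamma> H) (subtopology T H) TYPE('p::prime_card)"
proof (intro allI impI)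
  fix H assume H: "subgroup H \<Gamma> \<and> closedin T H"
  interpret group \<Gamma>
    using assms(1) unfolding profinite_group_def topological_group_def by blast
  have open_case: "cup_kills_cor \<Gamma> T U \<kappa> \<and> cup_kernel_in_cor_image \<Gamma> T U \<kappa> \<and>
      res_kernel_in_cup_image \<Gamma> T U \<kappa>"
    if "subgroup U \<Gamma>" "openin T U" "cochain1_on T U \<kappa>" "hom_on \<Gamma> U \<kappa>"
    for U and \<kappa> :: "'a \<Rightarrow> 'p mod_ring"
    using assms(2) that unfolding cup_exact_subgroup_iff by blast
  show "cup_exact (subgrp \<Gamma> H) (subtopology T H) TYPE('p)"
    unfolding cup_exact_subgroup_iff
  proof (intro allI impI conjI)
    fix \<kappa> :: "'a \<Rightarrow> 'p mod_ring" assume \<kappa>: "cochain1_on T H \<kappa> \<and> hom_on \<Gamma> H \<kappa>"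
    note closed_case = assms(1) conjunct1[OF H] conjunct2[OF H] conjunct1[OF \<kappa>] conjunct2[OF \<kappa>]
    show "cup_kills_cor \<Gamma> T H \<kappa>"
      using closed_case by (rule cup_kills_cor_closed) (use open_case in blast)
    show "cup_kernel_in_cor_image \<Gamma> T H \<kappa>"
      using closed_case by (rule cup_kernel_in_cor_image_closed) (use open_case in blast)
    show "res_kernel_in_cup_image \<Gamma> T H \<kappa>"
      using closed_case by (rule res_kernel_in_cup_image_closed) (use open_case in blast)
  qed
qed

end
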